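(* Let $\Sigma=\{a\}$. For $n\ge0$ let $P_{2n}$ be the pomset with events $e_1,\dots,e_{2n}$ all labelled $a$, precedence $e_i<e_j$ iff $j\ge i+2$, event order $e_i\dashrightarrow e_{i+1}$ and $e_{i+2}\dashrightarrow e_{i+1}$ for odd $i$ (whenever these events exist), i.e. each odd-indexed event is $\dashrightarrow$-before its concurrent even-indexed neighbours, and empty source and target interfaces ($P_0$ is the empty pomset). Then the language $\{P_{2n}\mid n\ge0\}$ is recognized by a finite aperiodic category: there exist a finite category $\mathcal C$ and $N\in\mathbb N$ with $x^{N+1}=x^N$ for every endomorphism $x$ of $\mathcal C$, $K\subseteq\mathrm{Mor}(\mathcal C)$ and a functor $F:\mathrm{iiPoms}\to\mathcal C$ with $\{P_{2n}\mid n\ge0\}=F^{-1}(K)$.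
   Context: Pomsets $(P,<,\dashrightarrow,\lambda,S,T)$ over $\Sigma$: $P$ finite, $<$ a strict partial interval order, $\dashrightarrow$ acyclic relating (in one direction) distinct $<$-incomparable elements, $\lambda:P\to\Sigma$, $S$/$T$ sets of $<$-minimal/maximal elements viewed as conclists (finite sets with strict total order and labelling); up to isomorphism. $\mathrm{iiPoms}$: category with objects conclists, morphisms $U\to V$ pomsets with source $U$, target $V$, composition the gluing $P*Q$ (identify $T_P$ with $S_Q$; precedence $<_P\cup<_Q\cup(P\setminus T_P)\times(Q\setminus S_Q)$; event orders and labels united; source $S_P$, target $T_Q$), identities $\mathrm{id}_U=(U,\emptyset,\dashrightarrow,\lambda,U,U)$. *)

theory Defs
  imports Main
begin

text \<open>Events are natural numbers; objects and morphisms of iiPoms are isomorphism classes,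
  represented here by concrete representatives together with invariance under isomorphism.\<close>

record 'a conclist =
  cl_car :: "nat set"
  cl_ord :: "(nat \<times> nat) set"
  cl_lab :: "nat \<Rightarrow> 'a"

record 'a ipomset =
  pcar :: "nat set"
  plt  :: "(nat \<times> nat) set"
  pev  :: "(nat \<times> nat) set"
  plab :: "nat \<Rightarrow> 'a"
  psrc :: "nat set"
  ptgt :: "nat set"

definition is_conclist :: "'a conclist \<Rightarrow> bool" where
  "is_conclist U \<longleftrightarrow> finite (cl_car U) \<and> cl_ord U \<subseteq> cl_car U \<times> cl_car U
     \<and> irrefl (cl_ord U) \<and> trans (cl_ord U)
     \<and> (\<forall>x\<in>cl_car U. \<forall>y\<in>cl_car U. x \<noteq> y \<longrightarrow> (x,y) \<in> cl_ord U \<or> (y,x) \<in> cl_ord U)"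

definition conclist_iso :: "'a conclist \<Rightarrow> 'a conclist \<Rightarrow> bool" where
  "conclist_iso U V \<longleftrightarrow> (\<exists>f. bij_betw f (cl_car U) (cl_car V)
     \<and> (\<forall>x\<in>cl_car U. cl_lab V (f x) = cl_lab U x)
     \<and> (\<forall>x\<in>cl_car U. \<forall>y\<in>cl_car U. (f x, f y) \<in> cl_ord V \<longleftrightarrow> (x,y) \<in> cl_ord U))"

definition is_ipomset :: "'a ipomset \<Rightarrow> bool" where
  "is_ipomset P \<longleftrightarrow> finite (pcar P)
     \<and> plt P \<subseteq> pcar P \<times> pcar P \<and> pev P \<subseteq> pcar P \<times> pcar P
     \<and> irrefl (plt P) \<and> trans (plt P)
     \<and> (\<forall>a b c d. (a,b) \<in> plt P \<and> (c,d) \<in> plt P \<longrightarrow> (a,d) \<in> plt P \<or> (c,b) \<in> plt P)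
     \<and> acyclic (pev P)
     \<and> (\<forall>x y. (x,y) \<in> pev P \<longrightarrow> (x,y) \<notin> plt P \<and> (y,x) \<notin> plt P)
     \<and> (\<forall>x\<in>pcar P. \<forall>y\<in>pcar P. x \<noteq> y \<and> (x,y) \<notin> plt P \<and> (y,x) \<notin> plt P
          \<longrightarrow> (x,y) \<in> pev P \<or> (y,x) \<in> pev P)
     \<and> psrc P \<subseteq> pcar P \<and> ptgt P \<subseteq> pcar P
     \<and> (\<forall>x\<in>psrc P. \<forall>y. (y,x) \<notin> plt P)
     \<and> (\<forall>x\<in>ptgt P. \<forall>y. (x,y) \<notin> plt P)"

definition ipomset_iso :: "'a ipomset \<Rightarrow> 'a ipomset \<Rightarrow> bool" where
  "ipomset_iso P Q \<longleftrightarrow> (\<exists>f. bij_betw f (pcar P) (pcar Q)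
     \<and> (\<forall>x\<in>pcar P. plab Q (f x) = plab P x)
     \<and> (\<forall>x\<in>pcar P. \<forall>y\<in>pcar P. (f x, f y) \<in> plt Q \<longleftrightarrow> (x,y) \<in> plt P)
     \<and> (\<forall>x\<in>pcar P. \<forall>y\<in>pcar P. (f x, f y) \<in> pev Q \<longleftrightarrow> (x,y) \<in> pev P)
     \<and> f ` psrc P = psrc Q \<and> f ` ptgt P = ptgt Q)"

definition src_cl :: "'a ipomset \<Rightarrow> 'a conclist" where
  "src_cl P = \<lparr>cl_car = psrc P, cl_ord = pev P \<inter> (psrc P \<times> psrc P), cl_lab = plab P\<rparr>"

definition tgt_cl :: "'a ipomset \<Rightarrow> 'a conclist" where
  "tgt_cl P = \<lparr>cl_car = ptgt P, cl_ord = pev P \<inter> (ptgt P \<times> ptgt P), cl_lab = plab P\<rparr>"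

definition id_pom :: "'a conclist \<Rightarrow> 'a ipomset" where
  "id_pom U = \<lparr>pcar = cl_car U, plt = {}, pev = cl_ord U, plab = cl_lab U,
               psrc = cl_car U, ptgt = cl_car U\<rparr>"

text \<open>R is (a representative of) the gluing P * Q: embeddings i, j of P and Q into R,
  jointly covering R, overlapping exactly in i(T_P) = j(S_Q), where the identification
  T_P ~ S_Q is an isomorphism of conclists; precedence, event order, labels and interfaces
  as in the definition of gluing.\<close>

definition is_gluing :: "'a ipomset \<Rightarrow> 'a ipomset \<Rightarrow> 'a ipomset \<Rightarrow> bool" where
  "is_gluing P Q R \<longleftrightarrow> (\<exists>i j. inj_on i (pcar P) \<and> inj_on j (pcar Q)
     \<and> pcar R = i ` pcar P \<union> j ` pcar Q
     \<and> i ` pcar P \<inter> j ` pcar Q = i ` ptgt P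
     \<and> i ` ptgt P = j ` psrc Q
     \<and> (\<forall>x\<in>ptgt P. \<forall>y\<in>ptgt P. \<forall>x'\<in>psrc Q. \<forall>y'\<in>psrc Q.
          i x = j x' \<longrightarrow> i y = j y' \<longrightarrow> ((x,y) \<in> pev P \<longleftrightarrow> (x',y') \<in> pev Q))
     \<and> (\<forall>x\<in>pcar P. plab R (i x) = plab P x)
     \<and> (\<forall>y\<in>pcar Q. plab R (j y) = plab Q y)
     \<and> plt R = (\<lambda>(x,y). (i x, i y)) ` plt P \<union> (\<lambda>(x,y). (j x, j y)) ` plt Q
              \<union> {(i x, j y) | x y. x \<in> pcar P - ptgt P \<and> y \<in> pcar Q - psrc Q}
     \<and> pev R = (\<lambda>(x,y). (i x, i y)) ` pev P \<union> (\<lambda>(x,y). (j x, j y)) ` pev Q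
     \<and> psrc R = i ` psrc P \<and> ptgt R = j ` ptgt Q)"

record fcat =
  Ob :: "nat set"
  Mor :: "nat set"
  cdom :: "nat \<Rightarrow> nat"
  ccod :: "nat \<Rightarrow> nat"
  cid :: "nat \<Rightarrow> nat"
  ccomp :: "nat \<Rightarrow> nat \<Rightarrow> nat"  \<comment> \<open>diagrammatic: ccomp f g = first f, then g\<close>

definition finite_category :: "fcat \<Rightarrow> bool" where
  "finite_category C \<longleftrightarrow> finite (Ob C) \<and> finite (Mor C)
     \<and> (\<forall>f\<in>Mor C. cdom C f \<in> Ob C \<and> ccod C f \<in> Ob C)
     \<and> (\<forall>x\<in>Ob C. cid C x \<in> Mor C \<and> cdom C (cid C x) = x \<and> ccod C (cid C x) = x)
     \<and> (\<forall>f\<in>Mor C. \<forall>g\<in>Mor C. ccod C f = cdom C g \<longrightarrow>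
          ccomp C f g \<in> Mor C \<and> cdom C (ccomp C f g) = cdom C f \<and> ccod C (ccomp C f g) = ccod C g)
     \<and> (\<forall>f\<in>Mor C. ccomp C (cid C (cdom C f)) f = f \<and> ccomp C f (cid C (ccod C f)) = f)
     \<and> (\<forall>f\<in>Mor C. \<forall>g\<in>Mor C. \<forall>h\<in>Mor C. ccod C f = cdom C g \<longrightarrow> ccod C g = cdom C h \<longrightarrow>
          ccomp C (ccomp C f g) h = ccomp C f (ccomp C g h))"

fun cpow :: "fcat \<Rightarrow> nat \<Rightarrow> nat \<Rightarrow> nat" where
  "cpow C x 0 = cid C (cdom C x)"
| "cpow C x (Suc n) = ccomp C (cpow C x n) x"

definition aperiodic_cat :: "fcat \<Rightarrow> nat \<Rightarrow> bool" where
  "aperiodic_cat C N \<longleftrightarrow> (\<forall>x\<in>Mor C. cdom C x = ccod C x \<longrightarrow> cpow C x (N+1) = cpow C x N)"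

definition iiPoms_functor :: "fcat \<Rightarrow> ('a conclist \<Rightarrow> nat) \<Rightarrow> ('a ipomset \<Rightarrow> nat) \<Rightarrow> bool" where
  "iiPoms_functor C Fo Fm \<longleftrightarrow>
     (\<forall>U V. is_conclist U \<and> is_conclist V \<and> conclist_iso U V \<longrightarrow> Fo U = Fo V)
   \<and> (\<forall>P Q. is_ipomset P \<and> is_ipomset Q \<and> ipomset_iso P Q \<longrightarrow> Fm P = Fm Q)
   \<and> (\<forall>U. is_conclist U \<longrightarrow> Fo U \<in> Ob C)
   \<and> (\<forall>P. is_ipomset P \<longrightarrow> Fm P \<in> Mor C \<and> cdom C (Fm P) = Fo (src_cl P)
                              \<and> ccod C (Fm P) = Fo (tgt_cl P))
   \<and> (\<forall>U. is_conclist U \<longrightarrow> Fm (id_pom U) = cid C (Fo U))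
   \<and> (\<forall>P Q R. is_ipomset P \<and> is_ipomset Q \<and> is_ipomset R \<and> is_gluing P Q R
              \<longrightarrow> Fm R = ccomp C (Fm P) (Fm Q))"

definition P2n :: "nat \<Rightarrow> unit ipomset" where
  "P2n n = \<lparr>pcar = {1..2*n},
            plt = {(i,j). i \<in> {1..2*n} \<and> j \<in> {1..2*n} \<and> i + 2 \<le> j},
            pev = {(i, i+1) | i. odd i \<and> i + 1 \<le> 2*n} \<union> {(i+2, i+1) | i. odd i \<and> i + 2 \<le> 2*n},
            plab = (\<lambda>_. ()),
            psrc = {}, ptgt = {}\<rparr>"

end

theory Submission
  imports Defs "HOL-Library.Countable"
begin

text \<open>Let \<open>P\<^sub>\<infinity>\<close> be the infinite pomset on the integers in which \<open>x < y\<close> iff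
  \<open>x + 2 \<le> y\<close> and every odd event is \<open>\<dashrightarrow>\<close>-before its two neighbours, so that
  \<open>P\<^sub>2\<^sub>n\<close> is its segment \<open>[1, 2n]\<close>. Up to a shift by an even amount, a cut of
  \<open>P\<^sub>\<infinity>\<close> (its finished and its running events) has one of eight shapes, two of which
  may only occur at the end of a word. A pomset is sent to the relation of all pairs of shapes
  \<open>(\<sigma>, \<tau>)\<close> such that it is isomorphic to the segment of \<open>P\<^sub>\<infinity>\<close> between a
  cut of shape \<open>\<sigma>\<close> and a later cut of shape \<open>\<tau>\<close>. Splitting a segment at the
  interface of a gluing, and conversely regluing two segments after an even shift, turns gluing
  into composition of relations, so this is a functor into a finite category of relations
  between shapes, in which \<open>P\<^sub>2\<^sub>n\<close> is recognised by the pair (start, end).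

  The relations that occur never move backwards through the phases start, \<open>Mid\<close>, end, and
  a pomset that is not an identity determines the \<open>Mid\<close> shape it starts from, because the
  event order reveals its parity. So a potential with ten values strictly increases along every
  step that is not a loop, every path of length ten contains a loop, and \<open>R\<^sup>1\<^sup>1 = R\<^sup>1\<^sup>0\<close>.\<close>

section \<open>Cuts of the infinite pomset\<close>

datatype shape = Init | Init2 | Mid1 bool | Mid2 bool | Fin1 | Fin

text \<open>A cut is a shape together with an anchor \<open>k\<close>; every integer below the anchor counts as
  finished, which spares lower bounds. The boolean of \<open>Mid1\<close> and \<open>Mid2\<close> records the parity
  of the anchor. After a \<open>Fin1\<close> or \<open>Fin\<close> cut no further event starts.\<close>

fun anchored :: "shape \<Rightarrow> int \<Rightarrow> bool" where
  "anchored Init k \<longleftrightarrow> k = 1"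
| "anchored Init2 k \<longleftrightarrow> k = 1"
| "anchored (Mid1 b) k \<longleftrightarrow> 1 \<le> k \<and> (odd k \<longleftrightarrow> b)"
| "anchored (Mid2 b) k \<longleftrightarrow> 1 \<le> k \<and> (odd k \<longleftrightarrow> b)"
| "anchored Fin1 k \<longleftrightarrow> 1 \<le> k \<and> odd k"
| "anchored Fin k \<longleftrightarrow> 1 \<le> k \<and> odd k"

fun finished :: "shape \<Rightarrow> int \<Rightarrow> int set" where
  "finished Fin1 k = {..<k} \<union> {k + 1}"
| "finished Init k = {..<k}"
| "finished Init2 k = {..<k}"
| "finished (Mid1 b) k = {..<k}"
| "finished (Mid2 b) k = {..<k}"
| "finished Fin k = {..<k}"

fun active :: "shape \<Rightarrow> int \<Rightarrow> int set" where
  "active Init k = {}"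
| "active Init2 k = {k + 1}"
| "active (Mid1 b) k = {k}"
| "active (Mid2 b) k = {k, k + 1}"
| "active Fin1 k = {k}"
| "active Fin k = {}"

definition started :: "shape \<Rightarrow> int \<Rightarrow> int set" where
  "started s k = finished s k \<union> active s k"

definition segment :: "shape \<Rightarrow> int \<Rightarrow> shape \<Rightarrow> int \<Rightarrow> int set" where
  "segment s k s' k' = started s' k' - finished s k"

text \<open>The empty word is read from \<open>Init\<close> to \<open>Init\<close>, not to \<open>Fin\<close>.\<close>

definition terminal_rule :: "shape \<Rightarrow> int \<Rightarrow> shape \<Rightarrow> int \<Rightarrow> bool" where
  "terminal_rule s k s' k' \<longleftrightarrow> (s = Fin \<longrightarrow> s' = Fin \<and> k' = k)
     \<and> (s = Fin1 \<longrightarrow> (s' = Fin1 \<and> k' = k) \<or> (s' = Fin \<and> k' = k + 2))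
     \<and> (s = Init \<and> s' = Fin \<longrightarrow> 3 \<le> k')"

definition cut_le :: "shape \<Rightarrow> int \<Rightarrow> shape \<Rightarrow> int \<Rightarrow> bool" where
  "cut_le s k s' k' \<longleftrightarrow> anchored s k \<and> anchored s' k' \<and> finished s k \<subseteq> finished s' k'
     \<and> started s k \<subseteq> started s' k' \<and> terminal_rule s k s' k'"

lemma finished_active_disjoint: "finished s k \<inter> active s k = {}"
  by (cases s) auto

lemma lessThan_subset_finished: "{..<k} \<subseteq> finished s k"
  by (cases s) auto

lemma anchor_not_finished: "k \<notin> finished s k"
  by (cases s) auto

lemma finished_eq_lessThan: "s \<noteq> Fin1 \<Longrightarrow> finished s k = {..<k}"
  by (cases s) auto

lemma started_simps [simp]:
  "started Init k = {..<k}" "started Init2 k = {..<k} \<union> {k + 1}" "started (Mid1 b) k = {..k}"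
  "started (Mid2 b) k = {..k + 1}" "started Fin1 k = {..k + 1}" "started Fin k = {..<k}"
  by (auto simp: started_def)

lemma atMost_subset_lessThan_int_iff [simp]: "{..(a::int)} \<subseteq> {..<b} \<longleftrightarrow> a < b"
  by auto

lemma lessThan_subset_atMost_int_iff [simp]: "{..<(a::int)} \<subseteq> {..b} \<longleftrightarrow> a \<le> b + 1"
proof
  assume h: "{..<a} \<subseteq> {..b}"
  then have "a - 1 \<in> {..b}" using subsetD[OF h, of "a - 1"] by auto
  then show "a \<le> b + 1" by auto
qed auto

lemma atMost_eq_lessThan_int_iff [simp]: "{..(a::int)} = {..<b} \<longleftrightarrow> b = a + 1"
proof
  assume h: "{..a} = {..<b}"
  have "a \<in> {..<b}" using h by (metis atMost_iff order_refl)
  moreover have "a + 1 \<notin> {..<b}" using h[symmetric] by auto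
  ultimately show "b = a + 1" by auto
qed auto

lemma anchored_pos: "anchored s k \<Longrightarrow> 1 \<le> k"
  by (cases s) auto

lemma anchored_same_shape:
  "anchored s a \<Longrightarrow> anchored s b \<Longrightarrow> even (a - b) \<and> (s = Init \<or> s = Init2 \<longrightarrow> a = b)"
  by (cases s) (auto simp: even_add)

lemma started_downward_closed: "x \<in> started s k \<Longrightarrow> y \<le> x \<Longrightarrow> s \<noteq> Init2 \<Longrightarrow> y \<in> started s k"
  by (cases s) auto

lemma started_le: "x \<in> started s k \<Longrightarrow> x \<le> k + 1"
  by (cases s) auto

lemma segment_iff: "x \<in> segment s k s' k' \<longleftrightarrow> x \<in> started s' k' \<and> x \<notin> finished s k"
  by (simp add: segment_def)

lemma segment_ge_anchor: "x \<in> segment s k s' k' \<Longrightarrow> k \<le> x"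
  using lessThan_subset_finished[of k s] unfolding segment_def by force

lemma segment_refl: "segment s k s k = active s k"
  using finished_active_disjoint[of s k] by (auto simp: segment_def started_def)

lemma cut_le_refl: "anchored s k \<Longrightarrow> cut_le s k s k"
  unfolding cut_le_def terminal_rule_def by (cases s) auto

lemma cut_le_anchor_mono: "cut_le s k s' k' \<Longrightarrow> k \<le> k'"
proof (rule ccontr)
  assume "cut_le s k s' k'" "\<not> k \<le> k'"
  then have "k' \<in> finished s k" using lessThan_subset_finished[of k s] by auto
  then have "k' \<in> finished s' k'" using \<open>cut_le s k s' k'\<close> unfolding cut_le_def by auto
  then show False using anchor_not_finished by blast
qed

lemma cut_le_trans:
  assumes "cut_le s k s' k'" "cut_le s' k' s'' k''"
  shows "cut_le s k s'' k''"
proof -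
  have "terminal_rule s k s'' k''"
  proof -
    have a: "terminal_rule s k s' k'" "terminal_rule s' k' s'' k''" "anchored s' k'"
      "anchored s'' k''" "started s' k' \<subseteq> started s'' k''"
      using assms unfolding cut_le_def by auto
    show ?thesis
    proof (cases s)
      case Init
      then show ?thesis
      proof (cases s')
        case Init2 then show ?thesis using a Init by (auto simp: terminal_rule_def)
      next
        case (Mid1 b) then show ?thesis using a Init by (auto simp: terminal_rule_def; presburger)
      next
        case (Mid2 b) then show ?thesis using a Init by (auto simp: terminal_rule_def; presburger)
      qed (use a Init in \<open>auto simp: terminal_rule_def\<close>)
    qed (use a in \<open>auto simp: terminal_rule_def\<close>)
  qed
  then show ?thesis using assms unfolding cut_le_def by blast
qed

lemma segment_union:
  assumes "cut_le s k s' k'" "cut_le s' k' s'' k''"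
  shows "segment s k s'' k'' = segment s k s' k' \<union> segment s' k' s'' k''"
  using assms finished_active_disjoint[of s' k'] unfolding cut_le_def segment_def started_def
  by blast

lemma active_subset_segment:
  assumes "cut_le s k s' k'"
  shows "active s k \<subseteq> segment s k s' k'" "active s' k' \<subseteq> segment s k s' k'"
  using assms finished_active_disjoint[of s k] finished_active_disjoint[of s' k']
  unfolding cut_le_def segment_def started_def by blast+

lemma segments_precede:
  assumes "cut_le s k s' k'" "cut_le s' k' s'' k''"
    and "a \<in> segment s k s' k' - active s' k'" "c \<in> segment s' k' s'' k'' - active s' k'"
  shows "a + 2 \<le> c"
proof -
  have a: "a \<in> finished s' k'" "a \<notin> finished s k" "c \<notin> started s' k'" "c \<in> started s'' k''"
    using assms(3,4) unfolding segment_def started_def by auto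
  have t: "anchored s k" "anchored s' k'" "finished s k \<subseteq> finished s' k'"
    "terminal_rule s' k' s'' k''" "started s' k' \<subseteq> started s'' k''" "k \<le> k'"
    using assms(1,2) cut_le_anchor_mono[OF assms(1)] unfolding cut_le_def by auto
  have k1: "1 \<le> k" using anchored_pos t(1) .
  show ?thesis
  proof (cases s')
    case Init then show ?thesis using a t k1 lessThan_subset_finished[of k s] by auto
  next
    case Init2 then show ?thesis using a t k1 lessThan_subset_finished[of k s] by auto
  next
    case (Mid1 b) then show ?thesis using a t by auto
  next
    case (Mid2 b) then show ?thesis using a t by auto
  next
    case Fin1 then show ?thesis using a t by (auto simp: terminal_rule_def)
  next
    case Fin then show ?thesis using a t by (auto simp: terminal_rule_def)
  qed
qed

lemma finished_shift: "finished s (k + d) = {x. x - d \<in> finished s k}"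
  by (cases s) auto

lemma active_shift: "active s (k + d) = {x. x - d \<in> active s k}"
  by (cases s) auto

lemma started_shift: "started s (k + d) = {x. x - d \<in> started s k}"
  unfolding started_def finished_shift active_shift by auto

lemma segment_shift: "segment s (k + d) s' (k' + d) = {x. x - d \<in> segment s k s' k'}"
  unfolding segment_def started_shift finished_shift by auto

lemma cut_le_Init_cases:
  assumes "cut_le s k s' k'" "s' = Init \<or> s' = Init2"
  shows "s = Init \<or> s = Init2"
proof (rule ccontr)
  assume s: "\<not> (s = Init \<or> s = Init2)"
  have "s \<noteq> Fin" using assms unfolding cut_le_def terminal_rule_def by auto
  with s assms(1) have "1 \<in> started s k" unfolding cut_le_def by (cases s) auto
  then have "1 \<in> started s' k'" using assms(1) unfolding cut_le_def by auto
  then show False using assms unfolding cut_le_def by auto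
qed

lemma cut_le_shift:
  assumes "cut_le s k s' k'" "even d" "1 \<le> k + d" "s = Init \<or> s = Init2 \<longrightarrow> d = 0"
  shows "cut_le s (k + d) s' (k' + d)"
proof (cases "d = 0")
  case False
  have ns: "s \<noteq> Init" "s \<noteq> Init2" using False assms(4) by auto
  have ns': "s' \<noteq> Init" "s' \<noteq> Init2" using cut_le_Init_cases[OF assms(1)] ns by auto
  have anch: "anchored s k" "anchored s' k'" using assms(1) unfolding cut_le_def by auto
  have "anchored s (k + d)" using anch(1) assms(2,3) ns by (cases s) (auto simp: even_add)
  moreover have "anchored s' (k' + d)"
    using anch(2) assms(2,3) ns' cut_le_anchor_mono[OF assms(1)] by (cases s') (auto simp: even_add)
  moreover have "finished s (k + d) \<subseteq> finished s' (k' + d)" "started s (k + d) \<subseteq> started s' (k' + d)"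
    using assms(1) unfolding cut_le_def finished_shift started_shift by auto
  moreover have "terminal_rule s (k + d) s' (k' + d)"
    using assms(1) ns unfolding cut_le_def terminal_rule_def by auto
  ultimately show ?thesis unfolding cut_le_def by auto
qed (use assms in simp)

lemma finished_eq_imp_anchor_eq: "finished s k = finished s' k' \<Longrightarrow> k = k'"
  by (metis anchor_not_finished lessThan_iff lessThan_subset_finished linorder_neqE subsetD)

lemma cut_le_antisym:
  assumes "cut_le s k s' k'" "segment s k s' k' = active s' k'" "active s k = active s' k'"
  shows "s = s' \<and> k = k'"
proof -
  have t: "anchored s k" "anchored s' k'" "finished s k \<subseteq> finished s' k'" "terminal_rule s k s' k'"
    using assms(1) unfolding cut_le_def by auto
  have "finished s' k' \<subseteq> finished s k"
    using assms(2) finished_active_disjoint[of s' k'] unfolding segment_def started_def by blast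
  then have F: "finished s k = finished s' k'" using t(3) by blast
  then have kk: "k = k'" by (rule finished_eq_imp_anchor_eq)
  have "(k + 1 \<in> finished s k) = (k + 1 \<in> finished s' k)" "(k \<in> active s k) = (k \<in> active s' k)"
    "(k + 1 \<in> active s k) = (k + 1 \<in> active s' k)"
    using F assms(3) kk by auto
  moreover have "anchored s k" "anchored s' k" "terminal_rule s k s' k" using t kk by auto
  ultimately have "s = s'" by (cases s; cases s'; simp add: terminal_rule_def)
  then show ?thesis using kk by simp
qed

section \<open>Splitting a segment\<close>

text \<open>A segment between two cuts, partitioned into a part \<open>A\<close> that is entirely finished, an
  interface \<open>I\<close> and a part \<open>C\<close> not yet started, as it arises when the segment is read as a
  gluing: then there is a cut in between whose active events are exactly \<open>I\<close>.\<close>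

locale segment_split =
  fixes s :: shape and k :: int and s'' :: shape and k'' :: int and A I C :: "int set"
  assumes le: "cut_le s k s'' k''"
    and seg: "segment s k s'' k'' = A \<union> I \<union> C"
    and disj_AI: "A \<inter> I = {}" and disj_AC: "A \<inter> C = {}" and disj_IC: "I \<inter> C = {}"
    and A_before_C: "\<forall>a\<in>A. \<forall>c\<in>C. a + 2 \<le> c"
    and I_antichain: "\<forall>x\<in>I. \<forall>y\<in>I. \<not> x + 2 \<le> y"
    and I_not_before_A: "\<forall>x\<in>I. \<forall>a\<in>A. \<not> x + 2 \<le> a"
    and C_not_before_I: "\<forall>x\<in>I. \<forall>c\<in>C. \<not> c + 2 \<le> x"
    and active_src: "active s k \<subseteq> A \<union> I" and active_tgt: "active s'' k'' \<subseteq> I \<union> C"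
begin

definition splittable :: bool where
  "splittable \<longleftrightarrow> (\<exists>s' k'. cut_le s k s' k' \<and> cut_le s' k' s'' k'' \<and> active s' k' = I
     \<and> segment s k s' k' = A \<union> I \<and> segment s' k' s'' k'' = I \<union> C)"

lemma outer_cut: "anchored s k" "anchored s'' k''" "finished s k \<subseteq> finished s'' k''"
  "started s k \<subseteq> started s'' k''" "terminal_rule s k s'' k''" "k \<le> k''" "1 \<le> k"
  using le cut_le_anchor_mono[OF le] anchored_pos[of s k] unfolding cut_le_def by auto

lemma parts_iff: "x \<in> A \<union> I \<union> C \<longleftrightarrow> x \<in> started s'' k'' \<and> x \<notin> finished s k"
  using seg segment_iff by blast

lemma parts_ge_anchor: "x \<in> A \<union> I \<union> C \<Longrightarrow> k \<le> x"
  using seg segment_ge_anchor by blast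

lemma splittableI:
  assumes anch: "anchored s' k'" and fin: "finished s' k' = finished s k \<union> A"
    and act: "active s' k' = I"
    and r1: "terminal_rule s k s' k'" and r2: "terminal_rule s' k' s'' k''"
  shows splittable
proof -
  have "finished s k \<subseteq> started s'' k''" using outer_cut(4) unfolding started_def by auto
  then have st: "started s'' k'' = finished s k \<union> A \<union> I \<union> C"
    and dj: "finished s k \<inter> (A \<union> I \<union> C) = {}"
    using seg unfolding segment_def by auto
  have "A \<subseteq> finished s'' k''"
    using st active_tgt disj_AI disj_AC unfolding started_def by blast
  then have "cut_le s k s' k'" "cut_le s' k' s'' k''"
    using outer_cut anch r1 r2 fin act active_src st unfolding cut_le_def started_def by blast+
  moreover have "segment s k s' k' = A \<union> I" "segment s' k' s'' k'' = I \<union> C"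
    using dj st disj_AI disj_AC disj_IC unfolding segment_def started_def fin act by blast+
  ultimately show ?thesis using act unfolding splittable_def by blast
qed

lemma splittable_at_source: "A = {} \<Longrightarrow> I = active s k \<Longrightarrow> splittable"
  by (rule splittableI[of s k]) (use outer_cut in \<open>auto simp: terminal_rule_def\<close>)

lemma splittable_no_C:
  assumes "C = {}" "anchored s' k'" "started s' k' = started s'' k''" "active s' k' = I"
    "terminal_rule s k s' k'" "terminal_rule s' k' s'' k''"
  shows splittable
proof -
  have "finished s k \<subseteq> started s'' k''" using outer_cut(4) unfolding started_def by auto
  then have e: "started s'' k'' = finished s k \<union> A \<union> I" and dj: "finished s k \<inter> (A \<union> I) = {}"
    using parts_iff assms(1) by auto
  have "finished s' k' = finished s k \<union> A"
    using e dj assms(3,4) finished_active_disjoint[of s' k'] disj_AI unfolding started_def by blast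
  then show ?thesis using splittableI assms by blast
qed

lemma splittable_at_target: "C = {} \<Longrightarrow> I = active s'' k'' \<Longrightarrow> splittable"
  using splittable_no_C[OF _ outer_cut(2) refl] outer_cut(5) by (auto simp: terminal_rule_def)

lemma I_le_2_at_start:
  assumes "A = {}" "finished s k = {..<1}" "y \<in> I"
  shows "y \<le> 2"
proof (rule ccontr)
  assume "\<not> y \<le> 2"
  have y: "y \<in> started s'' k''" "y \<notin> finished s k" using parts_iff assms(3) by auto
  have "s'' \<noteq> Init2"
  proof
    assume "s'' = Init2"
    then have "k'' = 1" using outer_cut(2) by simp
    then show False using y \<open>s'' = Init2\<close> \<open>\<not> y \<le> 2\<close> by auto
  qed
  then have "y - 2 \<in> started s'' k''" using started_downward_closed y(1) by auto
  moreover have "y - 2 \<notin> finished s k" using assms(2) \<open>\<not> y \<le> 2\<close> by auto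
  ultimately have "y - 2 \<in> I \<union> C" using parts_iff assms(1) by auto
  then show False using I_antichain C_not_before_I assms(3) by force
qed


lemma splittable_if_A_empty_at_Init:
  assumes A0: "A = {}" and s: "s = Init \<or> s = Init2"
  shows splittable
proof -
  have k1: "k = 1" using outer_cut(1) s by auto
  have fin1: "finished s k = {..<1}" using s k1 by auto
  have I12: "I \<subseteq> {1, 2}"
  proof
    fix y assume "y \<in> I"
    then show "y \<in> {1, 2}" using I_le_2_at_start[OF A0 fin1] parts_ge_anchor[of y] k1 by fastforce
  qed
  show ?thesis
  proof (cases "s = Init")
    case True
    have r: "terminal_rule Init 1 s'' k''" using outer_cut(5) True k1 by simp
    consider "I = {}" | "I = {1}" | "I = {2}" | "I = {1, 2}" using I12 by blast
    then show ?thesis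
    proof cases
      case 1 then show ?thesis
        using splittableI[of Init 1] A0 fin1 r by (auto simp: terminal_rule_def True k1)
    next
      case 2 then show ?thesis
        using splittableI[of "Mid1 True" 1] A0 fin1 r by (auto simp: terminal_rule_def True k1)
    next
      case 3 then show ?thesis
        using splittableI[of Init2 1] A0 fin1 r by (auto simp: terminal_rule_def True k1)
    next
      case 4 then show ?thesis
        using splittableI[of "Mid2 True" 1] A0 fin1 r by (auto simp: terminal_rule_def True k1)
    qed
  next
    case False
    then have Init2: "s = Init2" using s by simp
    have "2 \<in> I" using active_src A0 Init2 k1 by auto
    then consider "I = {2}" | "I = {1, 2}" using I12 by blast
    then show ?thesis
    proof cases
      case 1 then show ?thesis using splittable_at_source A0 Init2 k1 by simp
    next
      case 2 then show ?thesis
        using splittableI[of "Mid2 True" 1] A0 fin1 by (auto simp: terminal_rule_def Init2 k1)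
    qed
  qed
qed

lemma splittable_if_A_empty: "A = {} \<Longrightarrow> splittable"
proof -
  assume A0: "A = {}"
  show ?thesis
  proof (cases s)
    case (Mid1 b)
    have kI: "k \<in> I" using active_src A0 Mid1 by auto
    have "I \<subseteq> {k, k + 1}"
    proof
      fix y assume y: "y \<in> I"
      then have "k \<le> y" using parts_ge_anchor by auto
      moreover have "\<not> k + 2 \<le> y" using I_antichain kI y by blast
      ultimately show "y \<in> {k, k + 1}" by auto
    qed
    then consider "I = {k}" | "I = {k, k + 1}" using kI by blast
    then show ?thesis
    proof cases
      case 1 then show ?thesis using splittable_at_source A0 Mid1 by simp
    next
      case 2 then show ?thesis
        using splittableI[of "Mid2 b" k] A0 outer_cut(1) by (auto simp: terminal_rule_def Mid1)
    qed
  next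
    case (Mid2 b)
    have kI: "k \<in> I" "k + 1 \<in> I" using active_src A0 Mid2 by auto
    have "I \<subseteq> {k, k + 1}"
    proof
      fix y assume y: "y \<in> I"
      then have "k \<le> y" using parts_ge_anchor by auto
      moreover have "\<not> k + 2 \<le> y" using I_antichain kI y by blast
      ultimately show "y \<in> {k, k + 1}" by auto
    qed
    then have "I = {k, k + 1}" using kI by blast
    then show ?thesis using splittable_at_source A0 Mid2 by simp
  next
    case Fin1
    have "segment s k s'' k'' = {k}"
      using outer_cut(5) Fin1 unfolding terminal_rule_def segment_def by auto
    moreover have "k \<in> I" using active_src A0 Fin1 by auto
    ultimately have "I = {k}" using seg A0 by blast
    then show ?thesis using splittable_at_source A0 Fin1 by simp
  next
    case Fin
    have "segment s k s'' k'' = {}"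
      using outer_cut(5) Fin unfolding terminal_rule_def segment_def by auto
    then have "I = {}" using seg by blast
    then show ?thesis using splittable_at_source A0 Fin by simp
  qed (use splittable_if_A_empty_at_Init A0 in blast)+
qed

lemma splittable_if_C_empty_at_Mid1:
  assumes C0: "C = {}" and Mid1: "s'' = Mid1 b"
  shows splittable
proof -
  have kI: "k'' \<in> I" using active_tgt C0 Mid1 by auto
  have "I \<subseteq> {k'' - 1, k''}"
  proof
    fix y assume y: "y \<in> I"
    then have "y \<le> k''" using parts_iff Mid1 by auto
    moreover have "\<not> y + 2 \<le> k''" using I_antichain kI y by blast
    ultimately show "y \<in> {k'' - 1, k''}" by auto
  qed
  then consider "I = {k''}" | "I = {k'' - 1, k''}" using kI by blast
  then show ?thesis
  proof cases
    case 1 then show ?thesis using splittable_at_target C0 Mid1 by simp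
  next
    case 2
    then have "k \<le> k'' - 1" using parts_ge_anchor[of "k'' - 1"] by auto
    moreover have "s \<noteq> Fin \<and> s \<noteq> Fin1" using outer_cut(5) Mid1 by (auto simp: terminal_rule_def)
    ultimately show ?thesis
      using splittable_no_C[OF C0, of "Mid2 (\<not> b)" "k'' - 1"] outer_cut(1,2,7) 2 Mid1
      by (auto simp: terminal_rule_def)
  qed
qed

lemma splittable_if_C_empty_at_Fin1:
  assumes C0: "C = {}" and Fin1: "s'' = Fin1"
  shows splittable
proof -
  have kI: "k'' \<in> I" using active_tgt C0 Fin1 by auto
  show ?thesis
  proof (cases "s = Fin1")
    case True
    then have "k = k''" using outer_cut(5) Fin1 by (auto simp: terminal_rule_def)
    then have "segment s k s'' k'' = {k''}" using True Fin1 unfolding segment_def by auto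
    then have "I = {k''}" using kI seg by blast
    then show ?thesis using splittable_at_target C0 Fin1 by simp
  next
    case False
    have fin: "finished s k = {..<k}" using finished_eq_lessThan[OF False] .
    have not_Fin: "s \<noteq> Fin" using outer_cut(5) Fin1 by (auto simp: terminal_rule_def)
    have "I \<subseteq> {k'', k'' + 1}"
    proof
      fix y assume y: "y \<in> I"
      then have "y \<le> k'' + 1" using parts_iff Fin1 by auto
      moreover have "\<not> k'' + 2 \<le> y" "\<not> y + 2 \<le> k''" using I_antichain kI y by blast+
      moreover have "y \<noteq> k'' - 1"
      proof
        assume "y = k'' - 1"
        have "k'' + 1 \<in> A \<union> I \<union> C" using parts_iff Fin1 fin outer_cut(6) by auto
        then show False using C0 I_not_before_A I_antichain y \<open>y = k'' - 1\<close> by force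
      qed
      ultimately show "y \<in> {k'', k'' + 1}" by auto
    qed
    then consider "I = {k''}" | "I = {k'', k'' + 1}" using kI by blast
    then show ?thesis
    proof cases
      case 1 then show ?thesis using splittable_at_target C0 Fin1 by simp
    next
      case 2 then show ?thesis
        using splittable_no_C[OF C0, of "Mid2 True" k''] outer_cut(2) False not_Fin Fin1
        by (auto simp: terminal_rule_def)
    qed
  qed
qed

lemma splittable_if_C_empty_at_Fin_from_Fin:
  assumes C0: "C = {}" and Fin: "s'' = Fin" and s: "s = Fin \<or> s = Fin1"
  shows splittable
proof -
  have "(s = Fin \<and> k'' = k) \<or> (s = Fin1 \<and> k'' = k + 2)"
    using outer_cut(5) Fin s by (auto simp: terminal_rule_def)
  then show ?thesis
  proof
    assume "s = Fin \<and> k'' = k"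
    then have "segment s k s'' k'' = {}" using Fin unfolding segment_def by auto
    then have "I = {}" using seg by blast
    then show ?thesis using splittable_at_target C0 Fin by simp
  next
    assume a: "s = Fin1 \<and> k'' = k + 2"
    then have "segment s k s'' k'' = {k}" using Fin unfolding segment_def by auto
    then have "I \<subseteq> {k}" using seg by blast
    then have "I = {} \<or> I = {k}" by (rule subset_singletonD)
    then show ?thesis
    proof
      assume "I = {}" then show ?thesis using splittable_at_target C0 Fin by simp
    next
      assume "I = {k}" then show ?thesis
        using splittable_no_C[OF C0, of Fin1 k] outer_cut(1) a Fin by (auto simp: terminal_rule_def)
    qed
  qed
qed

lemma splittable_if_C_empty_at_Fin:
  assumes C0: "C = {}" and Fin: "s'' = Fin" and s: "s \<noteq> Fin" "s \<noteq> Fin1"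
  shows splittable
proof -
  have fin: "finished s k = {..<k}" using finished_eq_lessThan s by auto
  have "I \<subseteq> {k'' - 2, k'' - 1}"
  proof
    fix y assume y: "y \<in> I"
    then have y1: "y \<le> k'' - 1" "k \<le> y" using parts_iff Fin parts_ge_anchor by auto
    have "\<not> y \<le> k'' - 3"
    proof
      assume "y \<le> k'' - 3"
      then have "y + 2 \<in> A \<union> I \<union> C" using parts_iff Fin fin y1 by auto
      then show False using C0 I_not_before_A I_antichain y by force
    qed
    then show "y \<in> {k'' - 2, k'' - 1}" using y1 by auto
  qed
  then consider "I = {}" | "I = {k'' - 1}" | "I = {k'' - 2}" | "I = {k'' - 2, k'' - 1}"
    by blast
  then show ?thesis
  proof cases
    case 1 then show ?thesis using splittable_at_target C0 Fin by simp
  next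
    case 2
    then have "k \<le> k'' - 1" using parts_ge_anchor[of "k'' - 1"] by auto
    then have "anchored (Mid1 False) (k'' - 1)" using outer_cut(2,7) Fin by auto
    then show ?thesis
      by (rule splittable_no_C[OF C0]) (use 2 Fin s in \<open>auto simp: terminal_rule_def\<close>)
  next
    case 3
    then have "k \<le> k'' - 2" using parts_ge_anchor[of "k'' - 2"] by auto
    then have "anchored Fin1 (k'' - 2)" using outer_cut(2,7) Fin by auto
    then show ?thesis
      by (rule splittable_no_C[OF C0]) (use 3 Fin s in \<open>auto simp: terminal_rule_def\<close>)
  next
    case 4
    then have "k \<le> k'' - 2" using parts_ge_anchor[of "k'' - 2"] by auto
    then have "anchored (Mid2 True) (k'' - 2)" using outer_cut(2,7) Fin by auto
    then show ?thesis
      by (rule splittable_no_C[OF C0]) (use 4 Fin s in \<open>auto simp: terminal_rule_def\<close>)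
  qed
qed

lemma splittable_if_C_empty: "C = {} \<Longrightarrow> splittable"
proof -
  assume C0: "C = {}"
  show ?thesis
  proof (cases s'')
    case Init
    then have "s = Init \<or> s = Init2" using cut_le_Init_cases le by auto
    then have "segment s k s'' k'' = {}" using Init outer_cut(1,2) unfolding segment_def by auto
    then have "I = {}" using seg by blast
    then show ?thesis using splittable_at_target C0 Init by simp
  next
    case Init2
    then have "s = Init \<or> s = Init2" using cut_le_Init_cases le by auto
    then have "segment s k s'' k'' \<subseteq> {2}" using Init2 outer_cut(1,2) unfolding segment_def by auto
    moreover have "2 \<in> I" using active_tgt C0 Init2 outer_cut(2) by auto
    ultimately have "I = {2}" using seg by blast
    then show ?thesis using splittable_at_target C0 Init2 outer_cut(2) by simp
  next
    case (Mid1 b)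
    then show ?thesis using splittable_if_C_empty_at_Mid1 C0 by blast
  next
    case (Mid2 b)
    have kI: "k'' \<in> I" "k'' + 1 \<in> I" using active_tgt C0 Mid2 by auto
    have "I \<subseteq> {k'', k'' + 1}"
    proof
      fix y assume y: "y \<in> I"
      then have "y \<le> k'' + 1" using parts_iff Mid2 by auto
      moreover have "\<not> y + 2 \<le> k'' + 1" using I_antichain kI y by blast
      ultimately show "y \<in> {k'', k'' + 1}" by auto
    qed
    then have "I = {k'', k'' + 1}" using kI by blast
    then show ?thesis using splittable_at_target C0 Mid2 by simp
  next
    case Fin
    then show ?thesis using splittable_if_C_empty_at_Fin_from_Fin splittable_if_C_empty_at_Fin C0
      by blast
  qed (use splittable_if_C_empty_at_Fin1 C0 in blast)
qed

lemma A_C_nonempty_shapes: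
  assumes "a \<in> A" "c \<in> C"
  shows "s \<noteq> Fin1 \<and> s \<noteq> Fin" "s'' \<noteq> Init2"
proof -
  have ac: "a + 2 \<le> c" using A_before_C assms by auto
  have a: "a \<in> started s'' k''" "a \<notin> finished s k" and c: "c \<in> started s'' k''" "c \<notin> finished s k"
    using parts_iff assms by auto
  show "s \<noteq> Fin1 \<and> s \<noteq> Fin"
  proof (rule ccontr)
    assume "\<not> (s \<noteq> Fin1 \<and> s \<noteq> Fin)"
    then have "segment s k s'' k'' \<subseteq> {k}"
      using outer_cut(5) unfolding terminal_rule_def segment_def by auto
    then have "a = k" "c = k" using seg assms by auto
    then show False using ac by auto
  qed
  show "s'' \<noteq> Init2"
  proof
    assume "s'' = Init2"
    moreover have "s = Init \<or> s = Init2" using cut_le_Init_cases le \<open>s'' = Init2\<close> by auto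
    ultimately show False using a c ac outer_cut(1,2) by auto
  qed
qed

text \<open>When neither \<open>A\<close> nor \<open>C\<close> is empty, the intermediate cut is anchored right after
  the last event of \<open>A\<close>.\<close>

lemma A_C_nonempty_Max_A:
  assumes An: "A \<noteq> {}" and Cn: "C \<noteq> {}"
  shows "k \<le> Max A" "Max A + 1 \<in> I" "I \<subseteq> {Max A + 1, Max A + 2}"
    "finished s k \<union> A = {..<Max A + 1}"
proof -
  define m where "m = Max A"
  have "finite A"
  proof (rule finite_subset)
    show "A \<subseteq> {k..k'' + 1}" using parts_iff parts_ge_anchor started_le by fastforce
  qed simp
  then have mA: "m \<in> A" and mmax: "\<And>a. a \<in> A \<Longrightarrow> a \<le> m" using An m_def by auto
  obtain c where cC: "c \<in> C" using Cn by auto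
  have mc: "m + 2 \<le> c" using A_before_C mA cC by auto
  have c: "c \<in> started s'' k''" using parts_iff cC by auto
  have m: "m \<in> started s'' k''" "k \<le> m" using parts_iff parts_ge_anchor mA by auto
  have not_Init2: "s'' \<noteq> Init2" and "s \<noteq> Fin1" using A_C_nonempty_shapes[OF mA cC] by auto
  then have fin: "finished s k = {..<k}" using finished_eq_lessThan by auto
  have m1: "m + 1 \<in> I"
  proof -
    have "m + 1 \<in> started s'' k''" using started_downward_closed[OF c _ not_Init2] mc by auto
    then have "m + 1 \<in> A \<union> I \<union> C" using parts_iff fin m(2) by auto
    moreover have "m + 1 \<notin> A" using mmax by force
    moreover have "m + 1 \<notin> C" using A_before_C mA by force
    ultimately show ?thesis by auto
  qed
  have I_sub: "I \<subseteq> {m + 1, m + 2}"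
  proof
    fix y assume y: "y \<in> I"
    have "\<not> y + 2 \<le> m + 1" "\<not> m + 1 + 2 \<le> y" using I_antichain m1 y by blast+
    moreover have "y \<noteq> m" using y mA disj_AI by auto
    ultimately show "y \<in> {m + 1, m + 2}" by auto
  qed
  have "{..<m + 1} \<subseteq> finished s k \<union> A"
  proof
    fix x assume x: "x \<in> {..<m + 1}"
    show "x \<in> finished s k \<union> A"
    proof (cases "x < k")
      case False
      then have "x \<in> started s'' k''" using started_downward_closed[OF m(1) _ not_Init2] x by auto
      then have "x \<in> A \<union> I \<union> C" using parts_iff fin False by auto
      moreover have "x \<notin> I" using I_sub x by auto
      moreover have "x \<notin> C" using A_before_C mA x by force
      ultimately show ?thesis by auto
    qed (use fin in auto)
  qed
  moreover have "finished s k \<union> A \<subseteq> {..<m + 1}" using fin m(2) mmax by fastforce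
  ultimately show "finished s k \<union> A = {..<Max A + 1}" unfolding m_def by blast
  show "k \<le> Max A" "Max A + 1 \<in> I" "I \<subseteq> {Max A + 1, Max A + 2}" using m m1 I_sub m_def by auto
qed

lemma splittable_if_A_C_nonempty:
  assumes "A \<noteq> {}" "C \<noteq> {}"
  shows splittable
proof -
  define m where "m = Max A"
  note max = A_C_nonempty_Max_A[OF assms, folded m_def]
  have "s \<noteq> Fin1 \<and> s \<noteq> Fin" using A_C_nonempty_shapes assms by blast
  then have r: "terminal_rule s k s' k'" if "s' \<noteq> Fin" for s' k'
    using that by (auto simp: terminal_rule_def)
  have pos: "1 \<le> m + 1" using max(1) outer_cut(7) by auto
  consider "I = {m + 1}" | "I = {m + 1, m + 2}" using max(2,3) by blast
  then show ?thesis
  proof cases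
    case 1
    show ?thesis
      by (rule splittableI[of "Mid1 (odd (m + 1))" "m + 1"])
        (use pos max(4) 1 r in \<open>auto simp: terminal_rule_def\<close>)
  next
    case 2
    show ?thesis
    proof (rule splittableI[of "Mid2 (odd (m + 1))" "m + 1"])
      show "active (Mid2 (odd (m + 1))) (m + 1) = I" using 2 by (simp add: add.assoc)
    qed (use pos max(4) r in \<open>auto simp: terminal_rule_def\<close>)
  qed
qed

lemma intermediate_cut:
  obtains s' k' where "cut_le s k s' k'" "cut_le s' k' s'' k''" "active s' k' = I"
    "segment s k s' k' = A \<union> I" "segment s' k' s'' k'' = I \<union> C"
proof -
  have splittable
    using splittable_if_A_empty splittable_if_C_empty splittable_if_A_C_nonempty by blast
  then show ?thesis using that unfolding splittable_def by blast
qed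

end

section \<open>Reading a pomset as a segment\<close>

definition inf_embedding :: "'a ipomset \<Rightarrow> (nat \<Rightarrow> int) \<Rightarrow> bool" where
  "inf_embedding X h \<longleftrightarrow> inj_on h (pcar X)
     \<and> (\<forall>x\<in>pcar X. \<forall>y\<in>pcar X. (x, y) \<in> plt X \<longleftrightarrow> h x + 2 \<le> h y)
     \<and> (\<forall>x\<in>pcar X. \<forall>y\<in>pcar X. (x, y) \<in> pev X \<longleftrightarrow> odd (h x) \<and> (h y = h x + 1 \<or> h y = h x - 1))"

definition reads :: "'a ipomset \<Rightarrow> shape \<Rightarrow> int \<Rightarrow> shape \<Rightarrow> int \<Rightarrow> (nat \<Rightarrow> int) \<Rightarrow> bool" where
  "reads X s k s' k' h \<longleftrightarrow> cut_le s k s' k' \<and> inf_embedding X h \<and> h ` pcar X = segment s k s' k'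
     \<and> h ` psrc X = active s k \<and> h ` ptgt X = active s' k'"

definition readings :: "'a ipomset \<Rightarrow> (shape \<times> shape) set" where
  "readings X = {(s, s'). \<exists>k k' h. reads X s k s' k' h}"

lemma is_ipomsetD:
  assumes "is_ipomset P"
  shows "plt P \<subseteq> pcar P \<times> pcar P" "pev P \<subseteq> pcar P \<times> pcar P"
    "psrc P \<subseteq> pcar P" "ptgt P \<subseteq> pcar P"
    "\<And>x y. x \<in> psrc P \<Longrightarrow> (y, x) \<notin> plt P"
    "\<And>x y. x \<in> ptgt P \<Longrightarrow> (x, y) \<notin> plt P"
  using assms unfolding is_ipomset_def by auto

lemma readsD:
  assumes "reads X s k s' k' h"
  shows "cut_le s k s' k'" "inj_on h (pcar X)" "h ` pcar X = segment s k s' k'"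
     "h ` psrc X = active s k" "h ` ptgt X = active s' k'"
     "\<And>x y. x \<in> pcar X \<Longrightarrow> y \<in> pcar X \<Longrightarrow> (x, y) \<in> plt X \<longleftrightarrow> h x + 2 \<le> h y"
     "\<And>x y. x \<in> pcar X \<Longrightarrow> y \<in> pcar X \<Longrightarrow>
        (x, y) \<in> pev X \<longleftrightarrow> odd (h x) \<and> (h y = h x + 1 \<or> h y = h x - 1)"
  using assms unfolding reads_def inf_embedding_def by auto

lemma inf_embedding_comp:
  assumes h: "inf_embedding Y h" and e: "inj_on e (pcar X)" "e ` pcar X \<subseteq> pcar Y"
    and lt: "\<And>x y. x \<in> pcar X \<Longrightarrow> y \<in> pcar X \<Longrightarrow> (e x, e y) \<in> plt Y \<longleftrightarrow> (x, y) \<in> plt X"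
    and ev: "\<And>x y. x \<in> pcar X \<Longrightarrow> y \<in> pcar X \<Longrightarrow> (e x, e y) \<in> pev Y \<longleftrightarrow> (x, y) \<in> pev X"
  shows "inf_embedding X (h \<circ> e)"
proof -
  have "inj_on (h \<circ> e) (pcar X)"
    using h e unfolding inf_embedding_def by (meson comp_inj_on inj_on_subset)
  moreover have "e x \<in> pcar Y" if "x \<in> pcar X" for x using e that by auto
  ultimately show ?thesis using h lt ev unfolding inf_embedding_def by auto
qed

lemma image_plus_int: "(\<lambda>x. h x + (d::int)) ` X = {y. y - d \<in> h ` X}"
  by (auto simp: image_iff) (metis diff_add_cancel)

lemma inf_embedding_shift:
  assumes "inf_embedding X h" "even d"
  shows "inf_embedding X (\<lambda>x. h x + d)"
  using assms unfolding inf_embedding_def inj_on_def by (auto simp: even_add)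

text \<open>Shifting a reading by an even amount keeps the event order, which depends on parity;
  the two initial shapes are pinned to anchor \<open>1\<close>.\<close>

lemma reads_shift:
  assumes r: "reads X s k s' k' h" and d: "even d" "1 \<le> k + d" "s = Init \<or> s = Init2 \<longrightarrow> d = 0"
  shows "reads X s (k + d) s' (k' + d) (\<lambda>x. h x + d)"
  using r cut_le_shift[OF _ d] inf_embedding_shift[OF _ d(1)]
  unfolding reads_def segment_shift active_shift image_plus_int by auto

section \<open>Gluing\<close>

locale gluing =
  fixes P Q R :: "'a ipomset" and i j :: "nat \<Rightarrow> nat"
  assumes valid_P: "is_ipomset P" and valid_Q: "is_ipomset Q"
    and inj_i: "inj_on i (pcar P)" and inj_j: "inj_on j (pcar Q)"
    and car: "pcar R = i ` pcar P \<union> j ` pcar Q"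
    and overlap: "i ` pcar P \<inter> j ` pcar Q = i ` ptgt P"
    and tgt_src: "i ` ptgt P = j ` psrc Q"
    and interface_ev: "\<forall>x\<in>ptgt P. \<forall>y\<in>ptgt P. \<forall>x'\<in>psrc Q. \<forall>y'\<in>psrc Q.
          i x = j x' \<longrightarrow> i y = j y' \<longrightarrow> ((x, y) \<in> pev P \<longleftrightarrow> (x', y') \<in> pev Q)"
    and lt: "plt R = (\<lambda>(x, y). (i x, i y)) ` plt P \<union> (\<lambda>(x, y). (j x, j y)) ` plt Q
              \<union> {(i x, j y) | x y. x \<in> pcar P - ptgt P \<and> y \<in> pcar Q - psrc Q}"
    and ev: "pev R = (\<lambda>(x, y). (i x, i y)) ` pev P \<union> (\<lambda>(x, y). (j x, j y)) ` pev Q"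
    and src: "psrc R = i ` psrc P" and tgt: "ptgt R = j ` ptgt Q"

lemma is_gluingE:
  assumes "is_ipomset P" "is_ipomset Q" "is_gluing P Q R"
  obtains i j where "gluing P Q R i j"
proof -
  have "\<exists>i j. gluing P Q R i j"
    using assms unfolding is_gluing_def gluing_def
    by (elim exE conjE) (intro exI conjI; assumption)
  then show ?thesis using that by blast
qed

context gluing
begin

lemma left_outside_right: "x \<in> pcar P \<Longrightarrow> x \<notin> ptgt P \<Longrightarrow> i x \<notin> j ` pcar Q"
proof
  assume a: "x \<in> pcar P" "x \<notin> ptgt P" "i x \<in> j ` pcar Q"
  then have "i x \<in> i ` ptgt P" using overlap by blast
  then show False using a inj_i is_ipomsetD(4)[OF valid_P] by (auto dest: inj_onD)
qed

lemma right_outside_left: "y \<in> pcar Q \<Longrightarrow> y \<notin> psrc Q \<Longrightarrow> j y \<notin> i ` pcar P"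
proof
  assume a: "y \<in> pcar Q" "y \<notin> psrc Q" "j y \<in> i ` pcar P"
  then have "j y \<in> j ` psrc Q" using overlap tgt_src by blast
  then show False using a inj_j is_ipomsetD(3)[OF valid_Q] by (auto dest: inj_onD)
qed

lemma tgt_glued: "x \<in> ptgt P \<Longrightarrow> \<exists>y\<in>psrc Q. i x = j y"
  using tgt_src by blast

lemma right_in_left: "y \<in> pcar Q \<Longrightarrow> j y \<in> i ` pcar P \<Longrightarrow> y \<in> psrc Q \<and> (\<exists>x\<in>ptgt P. j y = i x)"
  using right_outside_left overlap tgt_src by blast

lemma left_in_right: "x \<in> pcar P \<Longrightarrow> i x \<in> j ` pcar Q \<Longrightarrow> x \<in> ptgt P"
  using left_outside_right by blast

lemma lt_left_iff: "x \<in> pcar P \<Longrightarrow> y \<in> pcar P \<Longrightarrow> (i x, i y) \<in> plt R \<longleftrightarrow> (x, y) \<in> plt P"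
proof
  assume xy: "x \<in> pcar P" "y \<in> pcar P"
  show "(x, y) \<in> plt P \<Longrightarrow> (i x, i y) \<in> plt R" using lt by auto
  assume r: "(i x, i y) \<in> plt R"
  have pltP: "plt P \<subseteq> pcar P \<times> pcar P" and pltQ: "plt Q \<subseteq> pcar Q \<times> pcar Q"
    using is_ipomsetD(1)[OF valid_P] is_ipomsetD(1)[OF valid_Q] by auto
  have "plt R = (\<lambda>(x,y). (i x, i y)) ` plt P \<union> (\<lambda>(x,y). (j x, j y)) ` plt Q
              \<union> {(i x, j y) | x y. x \<in> pcar P - ptgt P \<and> y \<in> pcar Q - psrc Q}"
    using lt by auto
  with r consider (a) a b where "(a, b) \<in> plt P" "i x = i a" "i y = i b"
    | (b) a b where "(a, b) \<in> plt Q" "i x = j a" "i y = j b"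
    | (c) a b where "a \<in> pcar P - ptgt P" "b \<in> pcar Q - psrc Q" "i x = i a" "i y = j b"
    by auto
  then show "(x, y) \<in> plt P"
  proof cases
    case a
    then show ?thesis using xy pltP inj_i by (auto dest: inj_onD)
  next
    case b
    then have "b \<in> pcar Q" using pltQ by auto
    moreover have "j b \<in> i ` pcar P" using b xy by (metis image_eqI)
    ultimately have "b \<in> psrc Q" using right_in_left[of b] by auto
    then show ?thesis using b is_ipomsetD(5)[OF valid_Q] by auto
  next
    case c
    then have "j b \<in> i ` pcar P" using xy by (metis image_eqI)
    then show ?thesis using right_in_left[of b] c by auto
  qed
qed

lemma lt_right_iff: "x \<in> pcar Q \<Longrightarrow> y \<in> pcar Q \<Longrightarrow> (j x, j y) \<in> plt R \<longleftrightarrow> (x, y) \<in> plt Q"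
proof
  assume xy: "x \<in> pcar Q" "y \<in> pcar Q"
  show "(x, y) \<in> plt Q \<Longrightarrow> (j x, j y) \<in> plt R" using lt by auto
  assume r: "(j x, j y) \<in> plt R"
  have pltP: "plt P \<subseteq> pcar P \<times> pcar P" and pltQ: "plt Q \<subseteq> pcar Q \<times> pcar Q"
    using is_ipomsetD(1)[OF valid_P] is_ipomsetD(1)[OF valid_Q] by auto
  have "plt R = (\<lambda>(x,y). (i x, i y)) ` plt P \<union> (\<lambda>(x,y). (j x, j y)) ` plt Q
              \<union> {(i x, j y) | x y. x \<in> pcar P - ptgt P \<and> y \<in> pcar Q - psrc Q}"
    using lt by auto
  with r consider (a) a b where "(a, b) \<in> plt P" "j x = i a" "j y = i b"
    | (b) a b where "(a, b) \<in> plt Q" "j x = j a" "j y = j b"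
    | (c) a b where "a \<in> pcar P - ptgt P" "b \<in> pcar Q - psrc Q" "j x = i a" "j y = j b"
    by auto
  then show "(x, y) \<in> plt Q"
  proof cases
    case a
    then have "a \<in> pcar P" using pltP by auto
    then have "a \<in> ptgt P" using left_in_right[of a] a xy by force
    then show ?thesis using a is_ipomsetD(6)[OF valid_P] by auto
  next
    case b
    then show ?thesis using xy pltQ inj_j by (auto dest: inj_onD)
  next
    case c
    then show ?thesis using left_in_right[of a] xy by force
  qed
qed

lemma lt_cross: "x \<in> pcar P - ptgt P \<Longrightarrow> y \<in> pcar Q - psrc Q \<Longrightarrow> (i x, j y) \<in> plt R"
  using lt by auto

lemma not_lt_cross: "x \<in> pcar P - ptgt P \<Longrightarrow> y \<in> pcar Q - psrc Q \<Longrightarrow> (j y, i x) \<notin> plt R"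
proof
  assume xy: "x \<in> pcar P - ptgt P" "y \<in> pcar Q - psrc Q" and r: "(j y, i x) \<in> plt R"
  have pltP: "plt P \<subseteq> pcar P \<times> pcar P" and pltQ: "plt Q \<subseteq> pcar Q \<times> pcar Q"
    using is_ipomsetD(1)[OF valid_P] is_ipomsetD(1)[OF valid_Q] by auto
  have "plt R = (\<lambda>(x,y). (i x, i y)) ` plt P \<union> (\<lambda>(x,y). (j x, j y)) ` plt Q
              \<union> {(i x, j y) | x y. x \<in> pcar P - ptgt P \<and> y \<in> pcar Q - psrc Q}"
    using lt by auto
  with r consider (a) a b where "(a, b) \<in> plt P" "j y = i a" "i x = i b"
    | (b) a b where "(a, b) \<in> plt Q" "j y = j a" "i x = j b"
    | (c) a b where "a \<in> pcar P - ptgt P" "b \<in> pcar Q - psrc Q" "j y = i a" "i x = j b"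
    by auto
  then show False
  proof cases
    case a then show ?thesis using pltP right_outside_left[of y] xy by force
  next
    case b then show ?thesis using pltQ left_outside_right[of x] xy by force
  next
    case c then show ?thesis using right_outside_left[of y] xy by force
  qed
qed

lemma ev_left_iff: "x \<in> pcar P \<Longrightarrow> y \<in> pcar P \<Longrightarrow> (i x, i y) \<in> pev R \<longleftrightarrow> (x, y) \<in> pev P"
proof
  assume xy: "x \<in> pcar P" "y \<in> pcar P"
  show "(x, y) \<in> pev P \<Longrightarrow> (i x, i y) \<in> pev R" using ev by auto
  assume r: "(i x, i y) \<in> pev R"
  have pP: "pev P \<subseteq> pcar P \<times> pcar P" and pQ: "pev Q \<subseteq> pcar Q \<times> pcar Q"
    using is_ipomsetD(2)[OF valid_P] is_ipomsetD(2)[OF valid_Q] by auto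
  have "pev R = (\<lambda>(x,y). (i x, i y)) ` pev P \<union> (\<lambda>(x,y). (j x, j y)) ` pev Q"
    using ev by auto
  with r consider (a) a b where "(a, b) \<in> pev P" "i x = i a" "i y = i b"
    | (b) a b where "(a, b) \<in> pev Q" "i x = j a" "i y = j b"
    by auto
  then show "(x, y) \<in> pev P"
  proof cases
    case a
    then show ?thesis using xy pP inj_i by (auto dest: inj_onD)
  next
    case b
    then have ab: "a \<in> pcar Q" "b \<in> pcar Q" using pQ by auto
    have "a \<in> psrc Q" "b \<in> psrc Q" using right_in_left[OF ab(1)] right_in_left[OF ab(2)] b xy by force+
    moreover have "x \<in> ptgt P" "y \<in> ptgt P" using left_in_right xy b ab by force+
    ultimately show ?thesis using interface_ev[rule_format, of x y a b] b by simp
  qed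
qed

lemma ev_right_iff: "x \<in> pcar Q \<Longrightarrow> y \<in> pcar Q \<Longrightarrow> (j x, j y) \<in> pev R \<longleftrightarrow> (x, y) \<in> pev Q"
proof
  assume xy: "x \<in> pcar Q" "y \<in> pcar Q"
  show "(x, y) \<in> pev Q \<Longrightarrow> (j x, j y) \<in> pev R" using ev by auto
  assume r: "(j x, j y) \<in> pev R"
  have pP: "pev P \<subseteq> pcar P \<times> pcar P" and pQ: "pev Q \<subseteq> pcar Q \<times> pcar Q"
    using is_ipomsetD(2)[OF valid_P] is_ipomsetD(2)[OF valid_Q] by auto
  have "pev R = (\<lambda>(x,y). (i x, i y)) ` pev P \<union> (\<lambda>(x,y). (j x, j y)) ` pev Q"
    using ev by auto
  with r consider (a) a b where "(a, b) \<in> pev P" "j x = i a" "j y = i b"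
    | (b) a b where "(a, b) \<in> pev Q" "j x = j a" "j y = j b"
    by auto
  then show "(x, y) \<in> pev Q"
  proof cases
    case a
    then have ab: "a \<in> pcar P" "b \<in> pcar P" using pP by auto
    have "a \<in> ptgt P" "b \<in> ptgt P" using left_in_right ab a xy by force+
    moreover have "x \<in> psrc Q" "y \<in> psrc Q" using right_in_left xy a ab by force+
    ultimately show ?thesis using interface_ev[rule_format, of a b x y] a by simp
  next
    case b
    then show ?thesis using xy pQ inj_j by (auto dest: inj_onD)
  qed
qed

lemma no_ev_cross: "x \<in> pcar P - ptgt P \<Longrightarrow> y \<in> pcar Q - psrc Q \<Longrightarrow> (i x, j y) \<notin> pev R \<and> (j y, i x) \<notin> pev R"
proof -
  assume xy: "x \<in> pcar P - ptgt P" "y \<in> pcar Q - psrc Q"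
  have pP: "pev P \<subseteq> pcar P \<times> pcar P" and pQ: "pev Q \<subseteq> pcar Q \<times> pcar Q"
    using is_ipomsetD(2)[OF valid_P] is_ipomsetD(2)[OF valid_Q] by auto
  have e: "pev R = (\<lambda>(x,y). (i x, i y)) ` pev P \<union> (\<lambda>(x,y). (j x, j y)) ` pev Q"
    using ev by auto
  have "i x \<notin> j ` pcar Q" "j y \<notin> i ` pcar P" using left_outside_right right_outside_left xy by auto
  then show ?thesis unfolding e using pP pQ by force
qed

lemma car_parts: "pcar R = i ` (pcar P - ptgt P) \<union> i ` ptgt P \<union> j ` (pcar Q - psrc Q)"
  using car tgt_src is_ipomsetD(3,4)[OF valid_P] is_ipomsetD(3)[OF valid_Q] by blast

lemma car_parts_disjoint:
  "i ` (pcar P - ptgt P) \<inter> i ` ptgt P = {}"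
  "i ` (pcar P - ptgt P) \<inter> j ` (pcar Q - psrc Q) = {}"
  "i ` ptgt P \<inter> j ` (pcar Q - psrc Q) = {}"
proof -
  have "ptgt P \<subseteq> pcar P" "psrc Q \<subseteq> pcar Q" using is_ipomsetD[OF valid_P] is_ipomsetD[OF valid_Q] by auto
  then show "i ` (pcar P - ptgt P) \<inter> i ` ptgt P = {}" "i ` ptgt P \<inter> j ` (pcar Q - psrc Q) = {}"
    using inj_i inj_j tgt_src
    by (metis Diff_disjoint Int_commute image_empty inj_on_image_Int Diff_subset)+
  show "i ` (pcar P - ptgt P) \<inter> j ` (pcar Q - psrc Q) = {}"
    using left_outside_right by blast
qed

context
  fixes h s k s'' k'' assumes r: "reads R s k s'' k'' h"
begin

lemma reading_segment_split:
  "segment_split s k s'' k'' (h ` i ` (pcar P - ptgt P)) (h ` i ` ptgt P) (h ` j ` (pcar Q - psrc Q))"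
proof -
  note rr = readsD[OF r]
  have iR: "\<And>x. x \<in> pcar P \<Longrightarrow> i x \<in> pcar R" and jR: "\<And>x. x \<in> pcar Q \<Longrightarrow> j x \<in> pcar R"
    using car by auto
  have tP: "ptgt P \<subseteq> pcar P" "psrc P \<subseteq> pcar P" using is_ipomsetD[OF valid_P] by auto
  have sQ: "psrc Q \<subseteq> pcar Q" "ptgt Q \<subseteq> pcar Q" using is_ipomsetD[OF valid_Q] by auto
  have disj: "h ` X \<inter> h ` Y = {}" if "X \<subseteq> pcar R" "Y \<subseteq> pcar R" "X \<inter> Y = {}" for X Y
    using rr(2) that by (metis image_empty inj_on_image_Int)
  show ?thesis
  proof
    show "cut_le s k s'' k''" by (fact rr(1))
    show "segment s k s'' k'' =
        h ` i ` (pcar P - ptgt P) \<union> h ` i ` ptgt P \<union> h ` j ` (pcar Q - psrc Q)"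
      unfolding rr(3)[symmetric] car_parts by (simp add: image_Un)
    show "h ` i ` (pcar P - ptgt P) \<inter> h ` i ` ptgt P = {}"
      by (rule disj) (use iR tP car_parts_disjoint(1) in auto)
    show "h ` i ` (pcar P - ptgt P) \<inter> h ` j ` (pcar Q - psrc Q) = {}"
      by (rule disj) (use iR jR car_parts_disjoint(2) in auto)
    show "h ` i ` ptgt P \<inter> h ` j ` (pcar Q - psrc Q) = {}"
      by (rule disj) (use iR jR tP car_parts_disjoint(3) in force)+
    show "\<forall>a\<in>h ` i ` (pcar P - ptgt P). \<forall>c\<in>h ` j ` (pcar Q - psrc Q). a + 2 \<le> c"
      using lt_cross rr(6)[OF iR jR] by auto
    have not_after_tgt: "\<not> h (i x) + 2 \<le> h (i y)" if "x \<in> ptgt P" "y \<in> pcar P" for x y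
    proof -
      have "(x, y) \<notin> plt P" using is_ipomsetD(6)[OF valid_P] that by auto
      then have "(i x, i y) \<notin> plt R" using lt_left_iff that tP by auto
      then show ?thesis using rr(6)[OF iR iR] that tP by auto
    qed
    show "\<forall>x\<in>h ` i ` ptgt P. \<forall>y\<in>h ` i ` ptgt P. \<not> x + 2 \<le> y"
      using not_after_tgt tP by blast
    show "\<forall>x\<in>h ` i ` ptgt P. \<forall>a\<in>h ` i ` (pcar P - ptgt P). \<not> x + 2 \<le> a"
      using not_after_tgt by blast
    show "\<forall>x\<in>h ` i ` ptgt P. \<forall>c\<in>h ` j ` (pcar Q - psrc Q). \<not> c + 2 \<le> x"
    proof (intro ballI)
      fix a b assume "a \<in> h ` i ` ptgt P" "b \<in> h ` j ` (pcar Q - psrc Q)"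
      then obtain x y where xy: "x \<in> ptgt P" "y \<in> pcar Q" "a = h (i x)" "b = h (j y)" by auto
      obtain y0 where y0: "y0 \<in> psrc Q" "i x = j y0" using tgt_glued xy by blast
      have "(y, y0) \<notin> plt Q" using is_ipomsetD(5)[OF valid_Q] y0 by auto
      then have "(j y, j y0) \<notin> plt R" using lt_right_iff xy y0 sQ by auto
      then show "\<not> b + 2 \<le> a" using rr(6)[OF jR jR, of y y0] xy y0 sQ by auto
    qed
    have "i ` psrc P \<subseteq> i ` (pcar P - ptgt P) \<union> i ` ptgt P" using tP by auto
    then show "active s k \<subseteq> h ` i ` (pcar P - ptgt P) \<union> h ` i ` ptgt P"
      unfolding rr(4)[symmetric] src image_Un[symmetric] by (rule image_mono)
    have "j ` ptgt Q \<subseteq> i ` ptgt P \<union> j ` (pcar Q - psrc Q)" using sQ unfolding tgt_src by auto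
    then show "active s'' k'' \<subseteq> h ` i ` ptgt P \<union> h ` j ` (pcar Q - psrc Q)"
      unfolding rr(5)[symmetric] tgt image_Un[symmetric] by (rule image_mono)
  qed
qed

lemma reads_split:
  obtains s' k' where "reads P s k s' k' (h \<circ> i)" "reads Q s' k' s'' k'' (h \<circ> j)"
proof -
  note rr = readsD[OF r]
  have emb: "inf_embedding R h" using r unfolding reads_def by blast
  obtain s' k' where sk: "cut_le s k s' k'" "cut_le s' k' s'' k''" "active s' k' = h ` i ` ptgt P"
    "segment s k s' k' = h ` i ` (pcar P - ptgt P) \<union> h ` i ` ptgt P"
    "segment s' k' s'' k'' = h ` i ` ptgt P \<union> h ` j ` (pcar Q - psrc Q)"
    using segment_split.intermediate_cut[OF reading_segment_split] by blast
  have tP: "ptgt P \<subseteq> pcar P" and sQ: "psrc Q \<subseteq> pcar Q"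
    using is_ipomsetD[OF valid_P] is_ipomsetD[OF valid_Q] by auto
  have "inf_embedding P (h \<circ> i)"
    by (rule inf_embedding_comp[OF emb inj_i]) (use car lt_left_iff ev_left_iff in auto)
  moreover have "(h \<circ> i) ` pcar P = segment s k s' k'"
  proof -
    have "(h \<circ> i) ` pcar P = h ` i ` ((pcar P - ptgt P) \<union> ptgt P)"
      using tP by (simp add: image_comp Un_absorb2)
    then show ?thesis unfolding sk(4) by (simp only: image_Un)
  qed
  ultimately have "reads P s k s' k' (h \<circ> i)"
    using sk rr(4) src unfolding reads_def by (simp add: image_comp)
  moreover have "inf_embedding Q (h \<circ> j)"
    by (rule inf_embedding_comp[OF emb inj_j]) (use car lt_right_iff ev_right_iff in auto)
  moreover have "(h \<circ> j) ` pcar Q = segment s' k' s'' k''"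
  proof -
    have "(h \<circ> j) ` pcar Q = h ` j ` (psrc Q \<union> (pcar Q - psrc Q))"
      using sQ by (simp add: image_comp Un_absorb1)
    then show ?thesis unfolding sk(5) tgt_src by (simp only: image_Un)
  qed
  ultimately have "reads Q s' k' s'' k'' (h \<circ> j)"
    using sk rr(5) tgt tgt_src unfolding reads_def by (simp add: image_comp)
  then show ?thesis using that \<open>reads P s k s' k' (h \<circ> i)\<close> by blast
qed

end

lemma car_cases:
  assumes "z \<in> pcar R"
  obtains (left) x where "x \<in> pcar P - ptgt P" "z = i x" | (right) y where "y \<in> pcar Q" "z = j y"
proof -
  have "psrc Q \<subseteq> pcar Q" using is_ipomsetD(3)[OF valid_Q] .
  then show ?thesis using assms car tgt_src that by blast
qed

definition glued_map :: "(nat \<Rightarrow> int) \<Rightarrow> (nat \<Rightarrow> int) \<Rightarrow> nat \<Rightarrow> int" where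
  "glued_map hP hQ z =
     (if z \<in> i ` pcar P then hP (inv_into (pcar P) i z) else hQ (inv_into (pcar Q) j z))"

lemma glued_map_left: "x \<in> pcar P \<Longrightarrow> glued_map hP hQ (i x) = hP x"
  unfolding glued_map_def using inj_i by simp

context
  fixes hP hQ s k s' k' s'' k''
  assumes rP: "reads P s k s' k' hP" and rQ: "reads Q s' k' s'' k'' hQ"
begin

text \<open>Where the two readings meet, both place an event at the same position: for a two-event
  interface this is forced by the event order, which reveals the parity.\<close>

lemma interface_positions_agree:
  assumes x: "x \<in> ptgt P" and y: "y \<in> psrc Q" and e: "i x = j y"
  shows "hP x = hQ y"
proof -
  note p = readsD[OF rP] and q = readsD[OF rQ]
  have tP: "ptgt P \<subseteq> pcar P" using is_ipomsetD[OF valid_P] by auto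
  have sQ: "psrc Q \<subseteq> pcar Q" using is_ipomsetD[OF valid_Q] by auto
  have hx: "hP x \<in> active s' k'" using p(5) x by auto
  have hy: "hQ y \<in> active s' k'" using q(4) y by auto
  show ?thesis
  proof (cases "\<exists>b. s' = Mid2 b")
    case False
    then show ?thesis using hx hy by (cases s') auto
  next
    case True
    then obtain b where b: "s' = Mid2 b" by auto
    have hx2: "hP x \<in> {k', k' + 1}" "hQ y \<in> {k', k' + 1}" using hx hy b by auto
    define v where "v = (if hP x = k' then k' + 1 else k')"
    have "v \<in> active s' k'" using b v_def by auto
    then obtain x2 where x2: "x2 \<in> ptgt P" "hP x2 = v" using p(5) by (metis imageE)
    have vx: "v \<noteq> hP x" "v = hP x + 1 \<or> v = hP x - 1" using v_def hx2 by auto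
    obtain y2 where y2: "y2 \<in> psrc Q" "i x2 = j y2" using tgt_glued x2 by blast
    have "x2 \<noteq> x" using vx x2 by auto
    then have "y2 \<noteq> y" using y2 e x x2 inj_i tP by (metis inj_onD subsetD)
    then have "hQ y2 \<noteq> hQ y" using q(2) y y2 sQ by (metis inj_onD subsetD)
    moreover have "hQ y2 \<in> {k', k' + 1}" using q(4) y2 b by auto
    ultimately have vy: "hQ y2 = hQ y + 1 \<or> hQ y2 = hQ y - 1" using hx2 by auto
    have "(x, x2) \<in> pev P \<longleftrightarrow> (y, y2) \<in> pev Q" using interface_ev x x2 y y2 e by auto
    moreover have "(x, x2) \<in> pev P \<longleftrightarrow> odd (hP x)" using p(7)[of x x2] x x2 tP vx by auto
    moreover have "(y, y2) \<in> pev Q \<longleftrightarrow> odd (hQ y)" using q(7)[of y y2] y y2 sQ vy by auto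
    ultimately have "odd (hP x) \<longleftrightarrow> odd (hQ y)" by simp
    then show ?thesis using hx2 by auto
  qed
qed

lemma glued_map_right:
  assumes y: "y \<in> pcar Q"
  shows "glued_map hP hQ (j y) = hQ y"
proof (cases "j y \<in> i ` pcar P")
  case True
  then obtain x where x: "x \<in> ptgt P" "j y = i x" "y \<in> psrc Q" using right_in_left y by blast
  then have "glued_map hP hQ (j y) = hP x" using glued_map_left is_ipomsetD(4)[OF valid_P] by auto
  also have "\<dots> = hQ y" using interface_positions_agree x by simp
  finally show ?thesis .
qed (use y inj_j in \<open>simp add: glued_map_def\<close>)

lemma outer_positions_precede:
  assumes "x \<in> pcar P - ptgt P" "y \<in> pcar Q - psrc Q"
  shows "hP x + 2 \<le> hQ y"
proof (rule segments_precede[OF readsD(1)[OF rP] readsD(1)[OF rQ]])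
  note p = readsD[OF rP] and q = readsD[OF rQ]
  have "hP x \<notin> hP ` ptgt P" using assms p(2) is_ipomsetD(4)[OF valid_P] by (auto dest: inj_onD)
  then show "hP x \<in> segment s k s' k' - active s' k'" using p(3,5) assms by auto
  have "hQ y \<notin> hQ ` psrc Q" using assms q(2) is_ipomsetD(3)[OF valid_Q] by (auto dest: inj_onD)
  then show "hQ y \<in> segment s' k' s'' k'' - active s' k'" using q(3,4) assms by auto
qed

lemma glued_map_image: "glued_map hP hQ ` pcar R = segment s k s'' k''"
proof -
  have "glued_map hP hQ ` pcar R = glued_map hP hQ ` i ` pcar P \<union> glued_map hP hQ ` j ` pcar Q"
    using car by (simp add: image_Un)
  also have "glued_map hP hQ ` i ` pcar P = hP ` pcar P"
    using glued_map_left by (simp add: image_comp)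
  also have "glued_map hP hQ ` j ` pcar Q = hQ ` pcar Q"
    using glued_map_right by (simp add: image_comp)
  finally show ?thesis
    using readsD(3)[OF rP] readsD(3)[OF rQ] segment_union[OF readsD(1)[OF rP] readsD(1)[OF rQ]]
    by simp
qed

lemma glued_map_inj: "inj_on (glued_map hP hQ) (pcar R)"
proof (rule inj_onI)
  fix z1 z2 assume z: "z1 \<in> pcar R" "z2 \<in> pcar R" "glued_map hP hQ z1 = glued_map hP hQ z2"
  note p = readsD[OF rP] and q = readsD[OF rQ]
  have tP: "ptgt P \<subseteq> pcar P" using is_ipomsetD[OF valid_P] by auto
  have cross: False if "x \<in> pcar P - ptgt P" "y \<in> pcar Q" "hP x = hQ y" for x y
  proof (cases "y \<in> psrc Q")
    case True
    then obtain x' where "x' \<in> ptgt P" "j y = i x'" using tgt_src by (metis imageE imageI)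
    then have "hP x' = hQ y" using interface_positions_agree True by auto
    then have "x = x'" using that p(2) tP \<open>x' \<in> ptgt P\<close> by (metis DiffD1 inj_onD subsetD)
    then show False using that \<open>x' \<in> ptgt P\<close> by auto
  next
    case False
    then show False using outer_positions_precede[of x y] that by auto
  qed
  from z(1) show "z1 = z2"
  proof (cases rule: car_cases)
    case (left x1)
    from z(2) show ?thesis
    proof (cases rule: car_cases)
      case (left x2)
      then show ?thesis using \<open>x1 \<in> pcar P - ptgt P\<close> \<open>z1 = i x1\<close> z(3) glued_map_left p(2)
        by (auto dest: inj_onD)
    next
      case (right y2)
      then show ?thesis using \<open>x1 \<in> pcar P - ptgt P\<close> \<open>z1 = i x1\<close> z(3) glued_map_left
          glued_map_right cross by (metis DiffD1)
    qed
  next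
    case (right y1)
    from z(2) show ?thesis
    proof (cases rule: car_cases)
      case (left x2)
      then show ?thesis using \<open>y1 \<in> pcar Q\<close> \<open>z1 = j y1\<close> z(3) glued_map_left
          glued_map_right cross by (metis DiffD1)
    next
      case (right y2)
      then show ?thesis using \<open>y1 \<in> pcar Q\<close> \<open>z1 = j y1\<close> z(3) glued_map_right q(2)
        by (auto dest: inj_onD)
    qed
  qed
qed

lemma glued_map_relations:
  assumes z: "z1 \<in> pcar R" "z2 \<in> pcar R"
  shows "((z1, z2) \<in> plt R \<longleftrightarrow> glued_map hP hQ z1 + 2 \<le> glued_map hP hQ z2)
    \<and> ((z1, z2) \<in> pev R \<longleftrightarrow> odd (glued_map hP hQ z1)
         \<and> (glued_map hP hQ z2 = glued_map hP hQ z1 + 1 \<or> glued_map hP hQ z2 = glued_map hP hQ z1 - 1))"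
    (is "?rel z1 z2")
proof -
  note p = readsD[OF rP] and q = readsD[OF rQ]
  have tP: "ptgt P \<subseteq> pcar P" using is_ipomsetD[OF valid_P] by auto
  have PP: "?rel (i x1) (i x2)" if "x1 \<in> pcar P" "x2 \<in> pcar P" for x1 x2
    using that lt_left_iff ev_left_iff p(6,7) glued_map_left by auto
  have QQ: "?rel (j y1) (j y2)" if "y1 \<in> pcar Q" "y2 \<in> pcar Q" for y1 y2
    using that lt_right_iff ev_right_iff q(6,7) glued_map_right by auto
  have src_left: "\<exists>x\<in>ptgt P. j y = i x" if "y \<in> psrc Q" for y
    using tgt_src that by (metis imageE imageI)
  have PQ: "?rel (i x) (j y) \<and> ?rel (j y) (i x)" if "x \<in> pcar P - ptgt P" "y \<in> pcar Q" for x y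
  proof (cases "y \<in> psrc Q")
    case True
    then obtain x' where "x' \<in> ptgt P" "j y = i x'" using src_left by blast
    then show ?thesis using PP[of x x'] PP[of x' x] that tP by auto
  next
    case False
    have "(i x, j y) \<in> plt R" "(j y, i x) \<notin> plt R" "(i x, j y) \<notin> pev R" "(j y, i x) \<notin> pev R"
      using lt_cross not_lt_cross no_ev_cross that False by auto
    moreover have "hP x + 2 \<le> hQ y" using outer_positions_precede that False by auto
    ultimately show ?thesis using that glued_map_left glued_map_right by auto
  qed
  from z(1) show ?thesis
  proof (cases rule: car_cases)
    case (left x1)
    from z(2) show ?thesis by (cases rule: car_cases) (use left PP PQ in auto)
  next
    case (right y1)
    from z(2) show ?thesis by (cases rule: car_cases) (use right QQ PQ in auto)
  qed
qed

lemma reads_glue: "reads R s k s'' k'' (glued_map hP hQ)"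
  unfolding reads_def inf_embedding_def
proof (intro conjI ballI)
  note p = readsD[OF rP] and q = readsD[OF rQ]
  show "cut_le s k s'' k''" using cut_le_trans p(1) q(1) by blast
  show "inj_on (glued_map hP hQ) (pcar R)" by (rule glued_map_inj)
  show "glued_map hP hQ ` pcar R = segment s k s'' k''" by (rule glued_map_image)
  have "glued_map hP hQ ` psrc R = hP ` psrc P"
    unfolding src image_image using glued_map_left is_ipomsetD(3)[OF valid_P]
    by (intro image_cong) auto
  then show "glued_map hP hQ ` psrc R = active s k" using p(4) by simp
  have "glued_map hP hQ ` ptgt R = hQ ` ptgt Q"
    unfolding tgt image_image using glued_map_right is_ipomsetD(4)[OF valid_Q]
    by (intro image_cong) auto
  then show "glued_map hP hQ ` ptgt R = active s'' k''" using q(5) by simp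
qed (use glued_map_relations in blast)+

end


lemma readings_gluing: "readings R = readings P O readings Q"
proof
  show "readings R \<subseteq> readings P O readings Q"
  proof
    fix p assume "p \<in> readings R"
    then obtain s s'' k k'' h where p: "p = (s, s'')" "reads R s k s'' k'' h"
      unfolding readings_def by auto
    obtain s' k' where "reads P s k s' k' (h \<circ> i)" "reads Q s' k' s'' k'' (h \<circ> j)"
      using reads_split[OF p(2)] by blast
    then show "p \<in> readings P O readings Q" unfolding readings_def using p by blast
  qed
  show "readings P O readings Q \<subseteq> readings R"
  proof
    fix p assume "p \<in> readings P O readings Q"
    then obtain s s' s'' k1 k2 k3 k4 hP hQ where p: "p = (s, s'')" "reads P s k1 s' k2 hP"
      "reads Q s' k3 s'' k4 hQ"
      unfolding readings_def by blast
    have a: "anchored s' k2" "anchored s' k3"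
      using readsD(1)[OF p(2)] readsD(1)[OF p(3)] unfolding cut_le_def by auto
    have "reads Q s' (k3 + (k2 - k3)) s'' (k4 + (k2 - k3)) (\<lambda>x. hQ x + (k2 - k3))"
      by (rule reads_shift[OF p(3)]) (use anchored_same_shape[OF a] anchored_pos[OF a(1)] in auto)
    then have "reads Q s' k2 s'' (k4 + (k2 - k3)) (\<lambda>x. hQ x + (k2 - k3))" by simp
    then have "reads R s k1 s'' (k4 + (k2 - k3)) (glued_map hP (\<lambda>x. hQ x + (k2 - k3)))"
      by (rule reads_glue[OF p(2)])
    then show "p \<in> readings R" unfolding readings_def using p by blast
  qed
qed

end


section \<open>Invariance under isomorphism\<close>

lemma ipomset_iso_sym:
  assumes V: "is_ipomset P" and I: "ipomset_iso P Q"
  shows "ipomset_iso Q P"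
proof -
  obtain f where f: "bij_betw f (pcar P) (pcar Q)"
    and lab: "\<forall>x\<in>pcar P. plab Q (f x) = plab P x"
    and lt: "\<forall>x\<in>pcar P. \<forall>y\<in>pcar P. (f x, f y) \<in> plt Q \<longleftrightarrow> (x,y) \<in> plt P"
    and ev: "\<forall>x\<in>pcar P. \<forall>y\<in>pcar P. (f x, f y) \<in> pev Q \<longleftrightarrow> (x,y) \<in> pev P"
    and sr: "f ` psrc P = psrc Q" and tg: "f ` ptgt P = ptgt Q"
    using I unfolding ipomset_iso_def by (elim exE conjE) (rule that, assumption+)
  define g where "g = inv_into (pcar P) f"
  have g: "bij_betw g (pcar Q) (pcar P)" unfolding g_def by (rule bij_betw_inv_into[OF f])
  have fg: "\<And>u. u \<in> pcar Q \<Longrightarrow> f (g u) = u" unfolding g_def using f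
    by (simp add: bij_betw_def f_inv_into_f)
  have gQ: "\<And>u. u \<in> pcar Q \<Longrightarrow> g u \<in> pcar P" using g by (auto simp: bij_betw_def)
  have sub: "psrc P \<subseteq> pcar P" "ptgt P \<subseteq> pcar P" using is_ipomsetD[OF V] by auto
  have "\<forall>x\<in>pcar Q. plab P (g x) = plab Q x" using lab fg gQ by metis
  moreover have "\<forall>x\<in>pcar Q. \<forall>y\<in>pcar Q. (g x, g y) \<in> plt P \<longleftrightarrow> (x,y) \<in> plt Q"
    using lt fg gQ by metis
  moreover have "\<forall>x\<in>pcar Q. \<forall>y\<in>pcar Q. (g x, g y) \<in> pev P \<longleftrightarrow> (x,y) \<in> pev Q"
    using ev fg gQ by metis
  moreover have "g ` psrc Q = psrc P" "g ` ptgt Q = ptgt P"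
    unfolding sr[symmetric] tg[symmetric] g_def using f sub
    by (auto simp: bij_betw_def inv_into_image_cancel)
  ultimately show ?thesis unfolding ipomset_iso_def using g by blast
qed

lemma readings_iso_subset:
  assumes "ipomset_iso X Y"
  shows "readings Y \<subseteq> readings X"
proof
  obtain f where f: "bij_betw f (pcar X) (pcar Y)"
    and lt: "\<forall>x\<in>pcar X. \<forall>y\<in>pcar X. (f x, f y) \<in> plt Y \<longleftrightarrow> (x, y) \<in> plt X"
    and ev: "\<forall>x\<in>pcar X. \<forall>y\<in>pcar X. (f x, f y) \<in> pev Y \<longleftrightarrow> (x, y) \<in> pev X"
    and sr: "f ` psrc X = psrc Y" and tg: "f ` ptgt X = ptgt Y"
    using assms unfolding ipomset_iso_def by (elim exE conjE) (rule that, assumption+)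
  fix p assume "p \<in> readings Y"
  then obtain s k s' k' h where p: "p = (s, s')" and r: "reads Y s k s' k' h"
    unfolding readings_def by auto
  have "inf_embedding X (h \<circ> f)"
    by (rule inf_embedding_comp) (use r f lt ev in \<open>auto simp: reads_def bij_betw_def\<close>)
  then have "reads X s k s' k' (h \<circ> f)"
    using r f sr tg unfolding reads_def bij_betw_def image_comp[symmetric] by simp
  then show "p \<in> readings X" unfolding readings_def p by blast
qed

lemma readings_iso:
  assumes "is_ipomset P" "ipomset_iso P Q"
  shows "readings P = readings Q"
  using readings_iso_subset[OF assms(2)] readings_iso_subset[OF ipomset_iso_sym[OF assms]] by blast

section \<open>Identities\<close>

fun width :: "shape \<Rightarrow> nat" where
  "width Init = 0" | "width Init2 = 1" | "width (Mid1 b) = 1" | "width (Mid2 b) = 2"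
| "width Fin1 = 1" | "width Fin = 0"

definition shapes_of_width :: "nat \<Rightarrow> shape set" where
  "shapes_of_width n = {s. width s = n}"

lemma card_active: "card (active s k) = width s"
  by (cases s) auto

lemma finite_active [simp]: "finite (active s k)"
  by (cases s) auto

lemma width_le_2: "width s \<le> 2"
  by (cases s) auto

lemma reads_card:
  assumes V: "is_ipomset P" and r: "reads P s k s' k' h"
  shows "card (psrc P) = width s" "card (ptgt P) = width s'"
proof -
  note q = readsD[OF r]
  have sub: "psrc P \<subseteq> pcar P" "ptgt P \<subseteq> pcar P" using is_ipomsetD[OF V] by auto
  have "card (psrc P) = card (h ` psrc P)" using q(2) sub by (metis card_image inj_on_subset)
  then show "card (psrc P) = width s" using q(4) card_active by simp
  have "card (ptgt P) = card (h ` ptgt P)" using q(2) sub by (metis card_image inj_on_subset)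
  then show "card (ptgt P) = width s'" using q(5) card_active by simp
qed

lemma readings_card:
  assumes "is_ipomset P" "(s, s') \<in> readings P"
  shows "card (psrc P) = width s" "card (ptgt P) = width s'"
  using assms reads_card unfolding readings_def by auto

lemma readings_interface_only:
  assumes "psrc P = pcar P" "ptgt P = pcar P" "(s, s') \<in> readings P"
  shows "s = s'"
proof -
  obtain k k' h where r: "reads P s k s' k' h" using assms(3) unfolding readings_def by auto
  note q = readsD[OF r]
  have e: "segment s k s' k' = active s k" "segment s k s' k' = active s' k'"
    using q(3,4,5) assms(1,2) by auto
  then show ?thesis using cut_le_antisym[OF q(1) e(2)] by simp
qed

fun base_anchor :: "shape \<Rightarrow> int" where
  "base_anchor (Mid1 b) = (if b then 1 else 2)"
| "base_anchor (Mid2 b) = (if b then 1 else 2)"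
| "base_anchor _ = 1"

lemma anchored_base_anchor: "anchored s (base_anchor s)"
  by (cases s) auto

text \<open>The \<open>\<dashrightarrow>\<close>-first event goes to the odd position.\<close>

lemma conclist_positions:
  assumes U: "is_conclist U" and c: "width s = card (cl_car U)"
  obtains h where "bij_betw h (cl_car U) (active s k)"
    "\<forall>x\<in>cl_car U. \<forall>y\<in>cl_car U. (x, y) \<in> cl_ord U \<longleftrightarrow> odd (h x) \<and> (h y = h x + 1 \<or> h y = h x - 1)"
proof -
  have irr: "\<And>x. (x, x) \<notin> cl_ord U" using U unfolding is_conclist_def irrefl_def by auto
  have asym: "\<And>x y. (x, y) \<in> cl_ord U \<Longrightarrow> (y, x) \<notin> cl_ord U"
    using U irr unfolding is_conclist_def trans_def by blast
  have cI: "card (active s k) = card (cl_car U)" using c card_active by simp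
  show thesis
  proof (cases "width s = 2")
    case True
    then obtain b where sb: "s = Mid2 b" by (cases s) auto
    have "card (cl_car U) = 2" using c True by simp
    then obtain u v where uv: "cl_car U = {u, v}" "u \<noteq> v" by (meson card_2_iff)
    then have "(u, v) \<in> cl_ord U \<or> (v, u) \<in> cl_ord U" using U unfolding is_conclist_def by auto
    then obtain a b' where ab: "cl_car U = {a, b'}" "a \<noteq> b'" "(a, b') \<in> cl_ord U"
      using uv by (metis insert_commute)
    define ko where "ko = (if odd k then k else k + 1)"
    define ke where "ke = (if odd k then k + 1 else k)"
    define h where "h x = (if x = a then ko else ke)" for x
    have "active s k = {ko, ke}" using sb ko_def ke_def by auto
    then have "bij_betw h (cl_car U) (active s k)"
      unfolding bij_betw_def inj_on_def h_def ab(1) using ab(2) ko_def ke_def by auto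
    moreover have "\<forall>x\<in>cl_car U. \<forall>y\<in>cl_car U.
        (x, y) \<in> cl_ord U \<longleftrightarrow> odd (h x) \<and> (h y = h x + 1 \<or> h y = h x - 1)"
      unfolding ab(1) h_def using ab(2,3) asym irr ko_def ke_def by (auto simp: even_add)
    ultimately show thesis by (rule that)
  next
    case False
    then have "card (cl_car U) \<le> 1" using c width_le_2[of s] by simp
    moreover have "finite (cl_car U)" using U unfolding is_conclist_def by auto
    ultimately consider "cl_car U = {}" | u where "cl_car U = {u}"
      by (metis card_0_eq card_1_singletonE le_Suc_eq le_zero_eq One_nat_def)
    then show thesis
    proof cases
      case 1
      then have "active s k = {}" using cI by (simp add: card_eq_0_iff)
      show thesis by (rule that[of "\<lambda>_. 0"]) (use 1 \<open>active s k = {}\<close> in \<open>auto simp: bij_betw_def\<close>)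
    next
      case (2 u)
      then have "card (active s k) = 1" using cI by simp
      then obtain w where w: "active s k = {w}" by (meson card_1_singletonE)
      show thesis by (rule that[of "\<lambda>_. w"]) (use 2 w irr in \<open>auto simp: bij_betw_def\<close>)
    qed
  qed
qed

lemma readings_id:
  assumes U: "is_conclist U"
  shows "readings (id_pom U) = Id_on (shapes_of_width (card (cl_car U)))"
proof
  show "readings (id_pom U) \<subseteq> Id_on (shapes_of_width (card (cl_car U)))"
  proof
    fix p assume p: "p \<in> readings (id_pom U)"
    then obtain s k s' k' h where pe: "p = (s, s')" and r: "reads (id_pom U) s k s' k' h"
      unfolding readings_def by auto
    have "s = s'"
      by (rule readings_interface_only[of "id_pom U"]) (use p pe in \<open>auto simp: id_pom_def\<close>)
    moreover have "inj_on h (cl_car U)" "h ` cl_car U = active s k"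
      using readsD(2,4)[OF r] by (auto simp: id_pom_def)
    then have "card (cl_car U) = width s" using card_active[of s k] card_image by metis
    ultimately show "p \<in> Id_on (shapes_of_width (card (cl_car U)))"
      using pe shapes_of_width_def by auto
  qed
  show "Id_on (shapes_of_width (card (cl_car U))) \<subseteq> readings (id_pom U)"
  proof
    fix p assume "p \<in> Id_on (shapes_of_width (card (cl_car U)))"
    then obtain s where p: "p = (s, s)" and c: "width s = card (cl_car U)"
      unfolding shapes_of_width_def by auto
    define k where "k = base_anchor s"
    obtain h where hb: "bij_betw h (cl_car U) (active s k)"
      and hev: "\<forall>x\<in>cl_car U. \<forall>y\<in>cl_car U.
        (x, y) \<in> cl_ord U \<longleftrightarrow> odd (h x) \<and> (h y = h x + 1 \<or> h y = h x - 1)"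
      using conclist_positions[OF U c] by blast
    have "\<not> h x + 2 \<le> h y" if "x \<in> cl_car U" "y \<in> cl_car U" for x y
    proof -
      have "h x \<in> active s k" "h y \<in> active s k" using hb that by (auto simp: bij_betw_def)
      then show ?thesis by (cases s) auto
    qed
    then have "inf_embedding (id_pom U) h"
      using hb hev unfolding inf_embedding_def bij_betw_def by (simp add: id_pom_def)
    moreover have "cut_le s k s k" using cut_le_refl anchored_base_anchor k_def by simp
    ultimately have "reads (id_pom U) s k s k h"
      using hb unfolding reads_def bij_betw_def by (simp add: id_pom_def segment_refl)
    then show "p \<in> readings (id_pom U)" using p unfolding readings_def by blast
  qed
qed

section \<open>The words \<open>P\<^sub>2\<^sub>n\<close>\<close>

lemma pev_P2n: "(a, b) \<in> pev (P2n n) \<longleftrightarrow> a \<in> {1..2*n} \<and> b \<in> {1..2*n} \<and> odd a \<and> (b = a + 1 \<or> b + 1 = a)"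
proof
  assume "(a, b) \<in> pev (P2n n)"
  then have "(\<exists>i. a = i \<and> b = i + 1 \<and> odd i \<and> i + 1 \<le> 2*n) \<or> (\<exists>i. a = i + 2 \<and> b = i + 1 \<and> odd i \<and> i + 2 \<le> 2*n)"
    unfolding P2n_def by auto
  then show "a \<in> {1..2*n} \<and> b \<in> {1..2*n} \<and> odd a \<and> (b = a + 1 \<or> b + 1 = a)"
    by (auto elim!: oddE)
next
  assume a: "a \<in> {1..2*n} \<and> b \<in> {1..2*n} \<and> odd a \<and> (b = a + 1 \<or> b + 1 = a)"
  show "(a, b) \<in> pev (P2n n)"
  proof (cases "b = a + 1")
    case True then show ?thesis using a unfolding P2n_def by auto
  next
    case False
    then have b: "b + 1 = a" using a by auto
    then have "a \<ge> 3" using a by (auto elim!: oddE)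
    have "odd a" using a by simp
    then have "odd (a - 2)" using \<open>a \<ge> 3\<close> by presburger
    moreover have "a - 2 + 2 = a" "a - 2 + 1 = b" using \<open>a \<ge> 3\<close> b by auto
    ultimately have "odd (a - 2)" "a - 2 + 2 = a" "a - 2 + 1 = b" by auto
    then show ?thesis using a unfolding P2n_def by (auto intro!: exI[of _ "a - 2"])
  qed
qed

lemma reads_P2n:
  assumes n: "1 \<le> n"
  shows "reads (P2n n) Init 1 Fin (2 * int n + 1) int"
proof -
  have t: "cut_le Init 1 Fin (2 * int n + 1)" unfolding cut_le_def terminal_rule_def using n by auto
  have sg: "segment Init 1 Fin (2 * int n + 1) = {1..int (2*n)}" unfolding segment_def by auto
  have b: "bij_betw int (pcar (P2n n)) (segment Init 1 Fin (2 * int n + 1))"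
    unfolding sg by (simp add: P2n_def bij_betw_def image_int_atLeastAtMost)
  show ?thesis unfolding reads_def inf_embedding_def
  proof (intro conjI ballI)
    fix x y assume xy: "x \<in> pcar (P2n n)" "y \<in> pcar (P2n n)"
    show "((x, y) \<in> plt (P2n n)) = (int x + 2 \<le> int y)" using xy by (auto simp: P2n_def)
    show "((x, y) \<in> pev (P2n n)) = (odd (int x) \<and> (int y = int x + 1 \<or> int y = int x - 1))"
      using xy unfolding pev_P2n by (auto simp: P2n_def)
  qed (use t b in \<open>auto simp: P2n_def\<close>)
qed

lemma reads_P2n_0: "reads (P2n 0) Init 1 Init 1 int"
  by (simp add: reads_def inf_embedding_def cut_le_def terminal_rule_def segment_def P2n_def)

lemma reads_same_segment_iso:
  fixes X Y :: "unit ipomset"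
  assumes rX: "reads X s k s' k' hX" and rY: "reads Y s k s' k' hY"
    and empty: "active s k = {}" "active s' k' = {}"
  shows "ipomset_iso X Y"
proof -
  note x = readsD[OF rX] and y = readsD[OF rY]
  define f where "f = inv_into (pcar Y) hY \<circ> hX"
  have bX: "bij_betw hX (pcar X) (segment s k s' k')" and bY: "bij_betw hY (pcar Y) (segment s k s' k')"
    using x y by (auto simp: bij_betw_def)
  have f: "bij_betw f (pcar X) (pcar Y)"
    unfolding f_def by (rule bij_betw_trans[OF bX bij_betw_inv_into[OF bY]])
  have fX: "f x \<in> pcar Y" "hY (f x) = hX x" if "x \<in> pcar X" for x
  proof -
    have "hX x \<in> hY ` pcar Y" using that x(3) y(3) by auto
    then show "f x \<in> pcar Y" "hY (f x) = hX x" unfolding f_def by (auto intro: inv_into_into f_inv_into_f)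
  qed
  have "\<forall>x\<in>pcar X. \<forall>z\<in>pcar X. (f x, f z) \<in> plt Y \<longleftrightarrow> (x, z) \<in> plt X"
    using fX x(6) y(6) by simp
  moreover have "\<forall>x\<in>pcar X. \<forall>z\<in>pcar X. (f x, f z) \<in> pev Y \<longleftrightarrow> (x, z) \<in> pev X"
    using fX x(7) y(7) by simp
  moreover have "psrc X = {}" "ptgt X = {}" "psrc Y = {}" "ptgt Y = {}"
    using x(4,5) y(4,5) empty by auto
  ultimately show ?thesis using f unfolding ipomset_iso_def by auto
qed

lemma P2n_iff_readings:
  fixes P :: "unit ipomset"
  assumes V: "is_ipomset P"
  shows "(\<exists>n. ipomset_iso P (P2n n)) \<longleftrightarrow> (Init, Fin) \<in> readings P \<or> (Init, Init) \<in> readings P"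
proof
  assume "\<exists>n. ipomset_iso P (P2n n)"
  then obtain n where iso: "ipomset_iso P (P2n n)" by blast
  have "(Init, Fin) \<in> readings (P2n n) \<or> (Init, Init) \<in> readings (P2n n)"
  proof (cases "n = 0")
    case True
    then have "reads (P2n n) Init 1 Init 1 int" using reads_P2n_0 by simp
    then show ?thesis unfolding readings_def by blast
  next
    case False
    then have "reads (P2n n) Init 1 Fin (2 * int n + 1) int" using reads_P2n by simp
    then show ?thesis unfolding readings_def by blast
  qed
  then show "(Init, Fin) \<in> readings P \<or> (Init, Init) \<in> readings P"
    using readings_iso[OF V iso] by simp
next
  assume "(Init, Fin) \<in> readings P \<or> (Init, Init) \<in> readings P"
  then show "\<exists>n. ipomset_iso P (P2n n)"
  proof
    assume "(Init, Fin) \<in> readings P"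
    then obtain k k' h where r: "reads P Init k Fin k' h" unfolding readings_def by blast
    then have k: "k = 1" "odd k'" "3 \<le> k'"
      using readsD(1)[OF r] unfolding cut_le_def terminal_rule_def by auto
    define n where "n = nat ((k' - 1) div 2)"
    have "k' = 2 * int n + 1" "1 \<le> n" using k unfolding n_def by (auto elim!: oddE)
    then have "reads (P2n n) Init k Fin k' int" using reads_P2n k(1) by simp
    then show ?thesis using reads_same_segment_iso[OF r] by auto
  next
    assume "(Init, Init) \<in> readings P"
    then obtain k k' h where r: "reads P Init k Init k' h" unfolding readings_def by blast
    then have "k = 1" "k' = 1" using readsD(1)[OF r] unfolding cut_le_def by auto
    then show ?thesis using reads_same_segment_iso[OF r] reads_P2n_0 by auto
  qed
qed

section \<open>Admissible relations\<close>

fun phase :: "shape \<Rightarrow> nat" where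
  "phase Init = 0" | "phase Init2 = 1" | "phase (Mid1 b) = 2" | "phase (Mid2 b) = 2" | "phase Fin1 = 3" | "phase Fin = 4"

definition is_mid :: "shape \<Rightarrow> bool" where "is_mid s \<longleftrightarrow> (\<exists>b. s = Mid1 b \<or> s = Mid2 b)"

lemma phase_eq_2_iff: "phase s = 2 \<longleftrightarrow> is_mid s"
  unfolding is_mid_def by (cases s) auto

lemma cut_le_phase_mono: assumes "cut_le s k s' k'" shows "phase s \<le> phase s'"
proof (cases "s' = Init \<or> s' = Init2")
  case True
  then have s: "s = Init \<or> s = Init2" using cut_le_Init_cases assms by blast
  show ?thesis
  proof (cases "s = Init2 \<and> s' = Init")
    case True
    then have "2 \<in> started s k" "k = 1" "k' = 1" using assms unfolding cut_le_def by auto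
    then have "2 \<in> started s' k'" using assms unfolding cut_le_def by auto
    then show ?thesis using True \<open>k' = 1\<close> by simp
  next
    case False then show ?thesis using s True by auto
  qed
next
  case False
  have "terminal_rule s k s' k'" using assms unfolding cut_le_def by auto
  then show ?thesis using False by (cases s; cases s') (auto simp: terminal_rule_def)
qed

lemma readings_phase_mono: "(s, s') \<in> readings P \<Longrightarrow> phase s \<le> phase s'"
  unfolding readings_def using cut_le_phase_mono readsD(1) by blast

lemma reads_odd_iff_ev:
  assumes r: "reads P s k t l h" and x: "x \<in> pcar P" and y: "y \<in> pcar P"
    and d: "h y = h x + 1 \<or> h y = h x - 1"
  shows "odd (h x) \<longleftrightarrow> (\<exists>z\<in>pcar P. (x, z) \<in> pev P)"
  using readsD(7)[OF r x] readsD(7)[OF r x y] d y by auto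

lemma reads_segment_preimage: "reads P s k t l h \<Longrightarrow> v \<in> segment s k t l \<Longrightarrow> \<exists>x\<in>pcar P. h x = v"
  using readsD(3) by (metis imageE)

text \<open>In a reading starting at a \<open>Mid2\<close> cut the source event at the higher position is
  singled out by \<open>late_source\<close>: it is concurrent with the next event of the segment or, if
  there is none, it is the only target event.\<close>

definition late_source :: "'a ipomset \<Rightarrow> nat \<Rightarrow> bool" where
  "late_source P y \<longleftrightarrow> y \<in> psrc P \<and> ((\<exists>z\<in>pcar P - psrc P. (y, z) \<notin> plt P \<and> (z, y) \<notin> plt P)
      \<or> (pcar P = psrc P \<and> y \<in> ptgt P))"

fun mid_top :: "shape \<Rightarrow> int \<Rightarrow> int" where
  "mid_top (Mid1 b) l = l" | "mid_top (Mid2 b) l = l + 1" | "mid_top _ l = l"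

lemma started_mid: "is_mid t \<Longrightarrow> started t l = {..mid_top t l}"
  unfolding is_mid_def by auto

lemma active_mid_nonempty: "is_mid t \<Longrightarrow> active t l \<noteq> {}"
  unfolding is_mid_def by auto

lemma segment_mid:
  assumes "is_mid s" "is_mid t"
  shows "segment s k t l = {k..mid_top t l}"
  using assms started_mid[OF assms(2)] unfolding segment_def is_mid_def by auto

lemma inj_on_image_eq_singleton: "inj_on h A \<Longrightarrow> B \<subseteq> A \<Longrightarrow> x \<in> A \<Longrightarrow> h ` B = h ` {x} \<Longrightarrow> B = {x}"
  using inj_on_image_eq_iff by (metis empty_subsetI insert_subset)

lemma reads_Mid1_source:
  assumes V: "is_ipomset P" and nid: "\<not> (psrc P = pcar P \<and> ptgt P = pcar P)"
    and r: "reads P (Mid1 b) k t l h" and t: "is_mid t"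
  shows "\<exists>x. psrc P = {x} \<and> (b \<longleftrightarrow> (\<exists>z\<in>pcar P. (x, z) \<in> pev P))"
proof -
  note q = readsD[OF r]
  have sub: "psrc P \<subseteq> pcar P" "ptgt P \<subseteq> pcar P" using is_ipomsetD[OF V] by auto
  have hs: "h ` psrc P = {k}" using q(4) by simp
  then obtain x where x: "x \<in> psrc P" "h x = k" by (metis imageE insertI1)
  have src: "psrc P = {x}"
  proof
    show "psrc P \<subseteq> {x}"
    proof
      fix y assume "y \<in> psrc P"
      then have "h y = k" using hs by blast
      then show "y \<in> {x}" using q(2) x sub \<open>y \<in> psrc P\<close> by (auto dest: inj_onD)
    qed
  qed (use x in auto)
  have okb: "b \<longleftrightarrow> odd k" using q(1) unfolding cut_le_def by auto
  have Sg: "segment (Mid1 b) k t l = {k..mid_top t l}" using segment_mid t by (auto simp: is_mid_def)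
  have kin: "k \<in> segment (Mid1 b) k t l" using active_subset_segment(1)[OF q(1)] by auto
  have "k + 1 \<le> mid_top t l"
  proof (rule ccontr)
    assume "\<not> k + 1 \<le> mid_top t l"
    then have "segment (Mid1 b) k t l = {k}" using Sg kin by auto
    then have car: "h ` pcar P = {k}" using q(3) by simp
    have pc: "pcar P = {x}"
    proof
      show "pcar P \<subseteq> {x}"
      proof
        fix y assume y: "y \<in> pcar P"
        then have "h y = k" using car by blast
        then show "y \<in> {x}" using q(2) x sub y by (auto dest: inj_onD)
      qed
    qed (use x sub in auto)
    have "ptgt P \<noteq> {}" by (metis active_mid_nonempty[OF t] image_empty q(5))
    then have "ptgt P = pcar P" using sub pc by auto
    then show False using nid src pc by auto
  qed
  then have "k + 1 \<in> segment (Mid1 b) k t l" using Sg by auto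
  then obtain y where y: "y \<in> pcar P" "h y = k + 1" using reads_segment_preimage[OF r] by blast
  have "odd (h x) \<longleftrightarrow> (\<exists>z\<in>pcar P. (x, z) \<in> pev P)"
    by (rule reads_odd_iff_ev[OF r]) (use x y sub in auto)
  then show ?thesis using src okb x by auto
qed

lemma reads_Mid2_sources:
  assumes V: "is_ipomset P" and r: "reads P (Mid2 b) k t l h"
  obtains x0 x1 where "psrc P = {x0, x1}" "x0 \<noteq> x1" "h x0 = k" "h x1 = k + 1"
proof -
  note q = readsD[OF r]
  have sub: "psrc P \<subseteq> pcar P" using is_ipomsetD[OF V] by auto
  have hs: "h ` psrc P = {k, k + 1}" using q(4) by simp
  then obtain x0 x1 where x: "x0 \<in> psrc P" "h x0 = k" "x1 \<in> psrc P" "h x1 = k + 1"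
    by (metis imageE insertI1 insertI2 singletonI)
  have "psrc P \<subseteq> {x0, x1}"
  proof
    fix y assume y: "y \<in> psrc P"
    then have "h y = h x0 \<or> h y = h x1" using hs x by auto
    then show "y \<in> {x0, x1}"
      using inj_onD[OF q(2), of y x0] inj_onD[OF q(2), of y x1] x y sub by auto
  qed
  moreover have "x0 \<noteq> x1" using x by auto
  ultimately show thesis using that[of x0 x1] x by blast
qed

lemma reads_Mid2_late_source_next:
  assumes V: "is_ipomset P" and r: "reads P (Mid2 b) k t l h"
    and x: "psrc P = {x0, x1}" "h x0 = k" "h x1 = k + 1"
    and z: "z \<in> pcar P" "h z = k + 2"
  shows "late_source P x1 \<and> \<not> late_source P x0"
proof -
  note q = readsD[OF r]
  have sub: "x0 \<in> pcar P" "x1 \<in> pcar P" using is_ipomsetD(3)[OF V] x by auto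
  have zs: "z \<notin> psrc P" using x z by auto
  have "(x1, z) \<notin> plt P" "(z, x1) \<notin> plt P" using q(6)[of x1 z] q(6)[of z x1] x z sub by auto
  then have "late_source P x1" unfolding late_source_def using x z zs by blast
  moreover have "(x0, z') \<in> plt P" if z': "z' \<in> pcar P - psrc P" for z'
  proof -
    have "h z' \<in> segment (Mid2 b) k t l" using q(3) z' by auto
    then have "k \<le> h z'" by (rule segment_ge_anchor)
    moreover have "h z' \<noteq> k" "h z' \<noteq> k + 1"
      using z' x sub inj_onD[OF q(2), of z' x0] inj_onD[OF q(2), of z' x1] by auto
    ultimately have "k + 2 \<le> h z'" by auto
    then show "(x0, z') \<in> plt P" using q(6)[of x0 z'] x z' sub by auto
  qed
  then have "\<not> late_source P x0" unfolding late_source_def using z zs by blast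
  ultimately show ?thesis by blast
qed

lemma reads_Mid2_late_source_last:
  assumes V: "is_ipomset P" and nid: "\<not> (psrc P = pcar P \<and> ptgt P = pcar P)"
    and r: "reads P (Mid2 b) k t l h" and t: "is_mid t" and top: "mid_top t l = k + 1"
    and x: "psrc P = {x0, x1}" "x0 \<noteq> x1" "h x0 = k" "h x1 = k + 1"
  shows "late_source P x1 \<and> \<not> late_source P x0"
proof -
  note q = readsD[OF r]
  have sub: "psrc P \<subseteq> pcar P" "ptgt P \<subseteq> pcar P" using is_ipomsetD[OF V] by auto
  have "segment (Mid2 b) k t l = {k, k + 1}" using segment_mid t top by (auto simp: is_mid_def)
  then have "h ` pcar P = h ` psrc P" using q(3,4) by auto
  then have pc: "pcar P = psrc P" using inj_on_image_eq_iff[OF q(2)] sub by blast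
  have st: "started t l = {..k + 1}" using started_mid[OF t] top by simp
  have "ptgt P = {x1}"
  proof -
    obtain c where "t = Mid1 c \<or> t = Mid2 c" using t unfolding is_mid_def by auto
    then show ?thesis
    proof
      assume tc: "t = Mid1 c"
      then have "h ` ptgt P = h ` {x1}" using q(5) st x by simp
      then show ?thesis using inj_on_image_eq_singleton[OF q(2)] sub x by blast
    next
      assume tc: "t = Mid2 c"
      then have "h ` ptgt P = h ` psrc P" using q(4,5) st by simp
      then have "ptgt P = psrc P" using inj_on_image_eq_iff[OF q(2)] sub by blast
      then show ?thesis using pc nid by auto
    qed
  qed
  then show ?thesis unfolding late_source_def using x pc by auto
qed

lemma reads_Mid2_source:
  assumes V: "is_ipomset P" and nid: "\<not> (psrc P = pcar P \<and> ptgt P = pcar P)"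
    and r: "reads P (Mid2 b) k t l h" and t: "is_mid t"
  shows "\<exists>x0 x1. psrc P = {x0, x1} \<and> x0 \<noteq> x1 \<and> late_source P x1 \<and> \<not> late_source P x0
     \<and> (b \<longleftrightarrow> \<not> (\<exists>z\<in>pcar P. (x1, z) \<in> pev P))"
proof -
  note q = readsD[OF r]
  obtain x0 x1 where x: "psrc P = {x0, x1}" "x0 \<noteq> x1" "h x0 = k" "h x1 = k + 1"
    using reads_Mid2_sources[OF V r] .
  have sub: "x0 \<in> pcar P" "x1 \<in> pcar P" using is_ipomsetD(3)[OF V] x by auto
  have seg: "segment (Mid2 b) k t l = {k..mid_top t l}" using segment_mid t by (auto simp: is_mid_def)
  have "k + 1 \<in> segment (Mid2 b) k t l" using active_subset_segment(1)[OF q(1)] by auto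
  then consider "k + 2 \<le> mid_top t l" | "mid_top t l = k + 1" using seg by fastforce
  then have late: "late_source P x1 \<and> \<not> late_source P x0"
  proof cases
    case 1
    then have "k + 2 \<in> segment (Mid2 b) k t l" using seg by auto
    then obtain z where "z \<in> pcar P" "h z = k + 2" using reads_segment_preimage[OF r] by blast
    then show ?thesis using reads_Mid2_late_source_next[OF V r x(1,3,4)] by blast
  qed (use reads_Mid2_late_source_last[OF V nid r t _ x] in blast)
  have "b \<longleftrightarrow> odd k" using q(1) unfolding cut_le_def by auto
  moreover have "odd (h x1) \<longleftrightarrow> (\<exists>z\<in>pcar P. (x1, z) \<in> pev P)"
    by (rule reads_odd_iff_ev[OF r, of x1 x0]) (use x sub in auto)
  ultimately have "b \<longleftrightarrow> \<not> (\<exists>z\<in>pcar P. (x1, z) \<in> pev P)" using x by (auto simp: even_add)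
  then show ?thesis using x late by blast
qed

definition mid_determined :: "(shape \<times> shape) set \<Rightarrow> bool" where
  "mid_determined R \<longleftrightarrow> (\<forall>(a, b)\<in>R. is_mid a \<and> is_mid b \<longrightarrow> a = b)
     \<or> (\<exists>c. \<forall>(a, b)\<in>R. is_mid a \<and> is_mid b \<longrightarrow> a = c)"

lemma readings_mid_source_unique:
  assumes V: "is_ipomset P" and nid: "\<not> (psrc P = pcar P \<and> ptgt P = pcar P)"
    and r1: "(s1, t1) \<in> readings P" and r2: "(s2, t2) \<in> readings P"
    and M: "is_mid s1" "is_mid t1" "is_mid s2" "is_mid t2"
  shows "s1 = s2"
proof -
  obtain k1 l1 h1 where q1: "reads P s1 k1 t1 l1 h1" using r1 unfolding readings_def by auto
  obtain k2 l2 h2 where q2: "reads P s2 k2 t2 l2 h2" using r2 unfolding readings_def by auto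
  have c: "width s1 = width s2" using reads_card(1)[OF V q1] reads_card(1)[OF V q2] by simp
  obtain b1 where b1: "s1 = Mid1 b1 \<or> s1 = Mid2 b1" using M(1) unfolding is_mid_def by auto
  obtain b2 where b2: "s2 = Mid1 b2 \<or> s2 = Mid2 b2" using M(3) unfolding is_mid_def by auto
  show ?thesis
  proof (cases "s1 = Mid1 b1")
    case True
    then have T2: "s2 = Mid1 b2" using b2 c by auto
    obtain x where x: "psrc P = {x}" "b1 \<longleftrightarrow> (\<exists>z\<in>pcar P. (x, z) \<in> pev P)"
      using reads_Mid1_source[OF V nid q1[unfolded True] M(2)] by blast
    obtain x' where x': "psrc P = {x'}" "b2 \<longleftrightarrow> (\<exists>z\<in>pcar P. (x', z) \<in> pev P)"
      using reads_Mid1_source[OF V nid q2[unfolded T2] M(4)] by blast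
    have "x = x'" using x x' by auto
    then show ?thesis using True T2 x x' by auto
  next
    case False
    then have T1: "s1 = Mid2 b1" using b1 by auto
    then have T2: "s2 = Mid2 b2" using b2 c by auto
    obtain x0 x1 where x: "psrc P = {x0, x1}" "x0 \<noteq> x1" "late_source P x1" "\<not> late_source P x0"
        "b1 \<longleftrightarrow> \<not> (\<exists>z\<in>pcar P. (x1, z) \<in> pev P)"
      using reads_Mid2_source[OF V nid q1[unfolded T1] M(2)] by blast
    obtain y0 y1 where y: "psrc P = {y0, y1}" "y0 \<noteq> y1" "late_source P y1" "\<not> late_source P y0"
        "b2 \<longleftrightarrow> \<not> (\<exists>z\<in>pcar P. (y1, z) \<in> pev P)"
      using reads_Mid2_source[OF V nid q2[unfolded T2] M(4)] by blast
    have "y1 \<in> {x0, x1}" using x(1) y(1) by auto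
    then have "y1 = x1" using x(4) y(3) by auto
    then show ?thesis using T1 T2 x y by auto
  qed
qed

lemma readings_mid_determined:
  assumes V: "is_ipomset P"
  shows "mid_determined (readings P)"
proof (cases "psrc P = pcar P \<and> ptgt P = pcar P")
  case True
  then show ?thesis unfolding mid_determined_def using readings_interface_only by blast
next
  case False
  show ?thesis
  proof (cases "\<exists>a b. (a, b) \<in> readings P \<and> is_mid a \<and> is_mid b")
    case True
    then obtain a b where ab: "(a, b) \<in> readings P" "is_mid a" "is_mid b" by blast
    have "\<forall>(a', b')\<in>readings P. is_mid a' \<and> is_mid b' \<longrightarrow> a' = a"
      using readings_mid_source_unique[OF V False] ab by blast
    then show ?thesis unfolding mid_determined_def by blast
  next
    case False
    then show ?thesis unfolding mid_determined_def by blast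
  qed
qed



definition admissible :: "(shape \<times> shape) set \<Rightarrow> bool" where
  "admissible R \<longleftrightarrow> (\<forall>(a, b)\<in>R. phase a \<le> phase b) \<and> mid_determined R"

lemma readings_admissible: "is_ipomset P \<Longrightarrow> admissible (readings P)"
  unfolding admissible_def using readings_phase_mono readings_mid_determined by blast

lemma admissible_Id_on: "admissible (Id_on X)"
  unfolding admissible_def mid_determined_def by auto

lemma phase_eq_imp_mid: "phase a = phase b \<Longrightarrow> a \<noteq> b \<Longrightarrow> is_mid a \<and> is_mid b"
  unfolding is_mid_def by (cases a; cases b) auto

lemma admissible_relcomp: "admissible R1 \<Longrightarrow> admissible R2 \<Longrightarrow> admissible (R1 O R2)"
proof -
  assume p1: "admissible R1" and p2: "admissible R2"
  have r1: "\<And>a b. (a, b) \<in> R1 \<Longrightarrow> phase a \<le> phase b" and r2: "\<And>a b. (a, b) \<in> R2 \<Longrightarrow> phase a \<le> phase b"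
    using p1 p2 unfolding admissible_def by auto
  have rk: "\<forall>(a, b)\<in>R1 O R2. phase a \<le> phase b"
  proof (clarify)
    fix x y z assume "(x, y) \<in> R1" "(y, z) \<in> R2"
    then show "phase x \<le> phase z" using r1 r2 by (meson le_trans)
  qed
  have mid: "is_mid v" if "(a, v) \<in> R1" "(v, b) \<in> R2" "is_mid a" "is_mid b" for a v b
  proof -
    have "phase a = 2" "phase b = 2" using that phase_eq_2_iff by auto
    then have "phase v = 2" using r1[OF that(1)] r2[OF that(2)] by auto
    then show ?thesis using phase_eq_2_iff by auto
  qed
  have m1: "mid_determined R1" and m2: "mid_determined R2" using p1 p2 unfolding admissible_def by auto
  have "mid_determined (R1 O R2)"
  proof (cases "\<exists>c. \<forall>(a, b)\<in>R1. is_mid a \<and> is_mid b \<longrightarrow> a = c")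
    case True
    then obtain c where c: "\<forall>(a, b)\<in>R1. is_mid a \<and> is_mid b \<longrightarrow> a = c" by blast
    have "\<forall>(a, b)\<in>R1 O R2. is_mid a \<and> is_mid b \<longrightarrow> a = c" using c mid by blast
    then show ?thesis unfolding mid_determined_def by blast
  next
    case False
    then have d1: "\<forall>(a, b)\<in>R1. is_mid a \<and> is_mid b \<longrightarrow> a = b" using m1 unfolding mid_determined_def by blast
    show ?thesis
    proof (cases "\<forall>(a, b)\<in>R2. is_mid a \<and> is_mid b \<longrightarrow> a = b")
      case True
      then have "\<forall>(a, b)\<in>R1 O R2. is_mid a \<and> is_mid b \<longrightarrow> a = b" using d1 mid by fastforce
      then show ?thesis unfolding mid_determined_def by blast
    next
      case False
      then obtain c where c: "\<forall>(a, b)\<in>R2. is_mid a \<and> is_mid b \<longrightarrow> a = c" using m2 unfolding mid_determined_def by blast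
      have "\<forall>(a, b)\<in>R1 O R2. is_mid a \<and> is_mid b \<longrightarrow> a = c" using c d1 mid by fastforce
      then show ?thesis unfolding mid_determined_def by blast
    qed
  qed
  then show ?thesis using rk unfolding admissible_def by blast
qed


section \<open>Aperiodicity\<close>

text \<open>If every step of \<open>R\<close> that is not a loop strictly increases a potential bounded by
  \<open>n\<close>, every path of length \<open>n\<close> passes through a loop, which may be traversed once more or
  once less.\<close>

lemma relpow_loop_or_climb:
  fixes p :: "'a \<Rightarrow> nat"
  assumes climb: "\<And>a b. (a, b) \<in> R \<Longrightarrow> a \<noteq> b \<Longrightarrow> p a < p b"
  shows "(x, y) \<in> R ^^ n \<Longrightarrow> p x + n \<le> p y
    \<or> (\<exists>z i j. i + Suc j = n \<and> (x, z) \<in> R ^^ i \<and> (z, z) \<in> R \<and> (z, y) \<in> R ^^ j)"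
proof (induction n arbitrary: y)
  case (Suc n)
  then obtain w where xw: "(x, w) \<in> R ^^ n" and wy: "(w, y) \<in> R" by auto
  from Suc.IH[OF xw] show ?case
  proof
    assume "p x + n \<le> p w"
    moreover have "w = y \<or> p w < p y" using climb wy by blast
    ultimately show ?case using xw wy by fastforce
  next
    assume "\<exists>z i j. i + Suc j = n \<and> (x, z) \<in> R ^^ i \<and> (z, z) \<in> R \<and> (z, w) \<in> R ^^ j"
    then obtain z i j where "i + Suc j = n" "(x, z) \<in> R ^^ i" "(z, z) \<in> R" "(z, w) \<in> R ^^ j"
      by blast
    then show ?case using wy by (intro disjI2 exI[of _ z] exI[of _ i] exI[of _ "Suc j"]) auto
  qed
qed simp

lemma relpow_Suc_eq_if_potential:
  fixes p :: "'a \<Rightarrow> nat"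
  assumes climb: "\<And>a b. (a, b) \<in> R \<Longrightarrow> a \<noteq> b \<Longrightarrow> p a < p b" and bound: "\<And>a. p a < n"
  shows "R ^^ Suc n = R ^^ n"
proof
  show "R ^^ Suc n \<subseteq> R ^^ n"
  proof clarify
    fix x y assume xy: "(x, y) \<in> R ^^ Suc n"
    have "\<not> p x + Suc n \<le> p y" using bound[of y] by simp
    then obtain z i j where "i + Suc j = Suc n" "(x, z) \<in> R ^^ i" "(z, y) \<in> R ^^ j"
      using relpow_loop_or_climb[where p = p, OF climb xy] by blast
    moreover from this have "(x, y) \<in> R ^^ (i + j)" by (intro relpow_trans)
    ultimately show "(x, y) \<in> R ^^ n" by (metis add_Suc_right nat.inject)
  qed
  show "R ^^ n \<subseteq> R ^^ Suc n"
  proof clarify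
    fix x y assume xy: "(x, y) \<in> R ^^ n"
    have "\<not> p x + n \<le> p y" using bound[of y] by simp
    then obtain z i j where ij: "i + Suc j = n"
      and xz: "(x, z) \<in> R ^^ i" and zz: "(z, z) \<in> R" and zy: "(z, y) \<in> R ^^ j"
      using relpow_loop_or_climb[where p = p, OF climb xy] by blast
    have "(x, z) \<in> R ^^ Suc i" "(z, y) \<in> R ^^ Suc j"
      using relpow_Suc_I[OF xz zz] relpow_Suc_I2[OF zz zy] .
    then have "(x, y) \<in> R ^^ (Suc i + Suc j)" by (intro relpow_trans)
    moreover have "Suc i + Suc j = Suc n" using ij by simp
    ultimately show "(x, y) \<in> R ^^ Suc n" by metis
  qed
qed

text \<open>Along an admissible relation only loops keep the phase, except for steps between two
  \<open>Mid\<close> shapes, all of which start at the same shape \<open>c\<close>; the extra unit for the other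
  \<open>Mid\<close> shapes accounts for those.\<close>

definition potential :: "shape \<Rightarrow> shape \<Rightarrow> nat" where
  "potential c u = 2 * phase u + (if is_mid u \<and> u \<noteq> c then 1 else 0)"

lemma potential_less_10: "potential c u < 10"
  unfolding potential_def by (cases u) auto

lemma admissible_potential_climb:
  assumes "admissible R"
  obtains c where "\<And>a b. (a, b) \<in> R \<Longrightarrow> a \<noteq> b \<Longrightarrow> potential c a < potential c b"
proof -
  have ph: "\<And>a b. (a, b) \<in> R \<Longrightarrow> phase a \<le> phase b" using assms unfolding admissible_def by auto
  obtain c where c: "\<forall>(a, b)\<in>R. is_mid a \<and> is_mid b \<and> a \<noteq> b \<longrightarrow> a = c"
    using assms unfolding admissible_def mid_determined_def by blast
  have "potential c a < potential c b" if ab: "(a, b) \<in> R" "a \<noteq> b" for a b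
  proof (cases "phase a = phase b")
    case True
    then have "is_mid a \<and> is_mid b" using phase_eq_imp_mid ab by blast
    then show ?thesis using c ab True unfolding potential_def by auto
  next
    case False
    then show ?thesis using ph[OF ab(1)] unfolding potential_def by auto
  qed
  then show thesis by (rule that)
qed

lemma admissible_relpow_stable: "admissible R \<Longrightarrow> R ^^ 11 = R ^^ 10"
  by (metis admissible_potential_climb relpow_Suc_eq_if_potential potential_less_10 numeral_nat(3))

section \<open>The category and the functor\<close>

lemma UNIV_shape: "(UNIV :: shape set) = {Init, Init2, Mid1 True, Mid1 False, Mid2 True, Mid2 False, Fin1, Fin}"
proof -
  have "x \<in> {Init, Init2, Mid1 True, Mid1 False, Mid2 True, Mid2 False, Fin1, Fin}" for x
    by (cases x) auto
  then show ?thesis by blast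
qed

instance shape :: finite
  by standard (simp add: UNIV_shape)

text \<open>Objects are interface widths, capped at \<open>3\<close> since no shape has width above \<open>2\<close>.\<close>

definition arrows :: "(nat \<times> nat \<times> (shape \<times> shape) set) set" where
  "arrows = {(m, n, R). m \<le> 3 \<and> n \<le> 3 \<and> R \<subseteq> shapes_of_width m \<times> shapes_of_width n \<and> admissible R}"

definition decode :: "nat \<Rightarrow> nat \<times> nat \<times> (shape \<times> shape) set" where
  "decode = from_nat"

definition reading_cat :: fcat where
  "reading_cat = \<lparr>Ob = {0..3}, Mor = to_nat ` arrows,
     cdom = (\<lambda>f. fst (decode f)), ccod = (\<lambda>f. fst (snd (decode f))),
     cid = (\<lambda>m. to_nat (m, m, Id_on (shapes_of_width m))),
     ccomp = (\<lambda>f g. to_nat (fst (decode f), fst (snd (decode g)),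
                             snd (snd (decode f)) O snd (snd (decode g))))\<rparr>"

lemma reading_cat_simps [simp]:
  fixes m n n' p :: nat and R S :: "(shape \<times> shape) set"
  shows "Ob reading_cat = {0..3}" "Mor reading_cat = to_nat ` arrows"
  "cdom reading_cat (to_nat (m, n, R)) = m" "ccod reading_cat (to_nat (m, n, R)) = n"
  "cid reading_cat m = to_nat (m, m, Id_on (shapes_of_width m))"
  "ccomp reading_cat (to_nat (m, n, R)) (to_nat (n', p, S)) = to_nat (m, p, R O S)"
  by (simp_all add: reading_cat_def decode_def)

lemma arrows_relcomp:
  "(m, n, R) \<in> arrows \<Longrightarrow> (n, p, S) \<in> arrows \<Longrightarrow> (m, p, R O S) \<in> arrows"
  unfolding arrows_def using admissible_relcomp by blast

lemma arrows_Id_on: "m \<le> 3 \<Longrightarrow> (m, m, Id_on (shapes_of_width m)) \<in> arrows"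
  unfolding arrows_def using admissible_Id_on by blast

lemma finite_arrows: "finite arrows"
  by (rule finite_subset[of _ "{0..3} \<times> {0..3} \<times> UNIV"]) (auto simp: arrows_def)

lemma finite_category_reading_cat: "finite_category reading_cat"
  unfolding finite_category_def
proof (intro conjI ballI impI)
  show "finite (Ob reading_cat)" "finite (Mor reading_cat)" using finite_arrows by simp_all
next
  fix f assume "f \<in> Mor reading_cat"
  then obtain m n R where f: "f = to_nat (m, n, R)" "(m, n, R) \<in> arrows" by auto
  then show "cdom reading_cat f \<in> Ob reading_cat" "ccod reading_cat f \<in> Ob reading_cat"
    by (auto simp: arrows_def)
  have "R \<subseteq> shapes_of_width m \<times> shapes_of_width n" using f(2) by (simp add: arrows_def)
  then show "ccomp reading_cat (cid reading_cat (cdom reading_cat f)) f = f"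
    "ccomp reading_cat f (cid reading_cat (ccod reading_cat f)) = f"
    using f(1) by auto
next
  fix m assume "m \<in> Ob reading_cat"
  then show "cid reading_cat m \<in> Mor reading_cat" "cdom reading_cat (cid reading_cat m) = m"
    "ccod reading_cat (cid reading_cat m) = m"
    using arrows_Id_on by auto
next
  fix f g assume "f \<in> Mor reading_cat" "g \<in> Mor reading_cat" "ccod reading_cat f = cdom reading_cat g"
  then obtain m n R p S where "f = to_nat (m, n, R)" "g = to_nat (n, p, S)"
    "(m, n, R) \<in> arrows" "(n, p, S) \<in> arrows"
    by auto
  then show "ccomp reading_cat f g \<in> Mor reading_cat"
    "cdom reading_cat (ccomp reading_cat f g) = cdom reading_cat f"
    "ccod reading_cat (ccomp reading_cat f g) = ccod reading_cat g"
    using arrows_relcomp by auto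
next
  fix f g h assume "f \<in> Mor reading_cat" "g \<in> Mor reading_cat" "h \<in> Mor reading_cat"
  then show "ccomp reading_cat (ccomp reading_cat f g) h = ccomp reading_cat f (ccomp reading_cat g h)"
    by (auto simp: O_assoc)
qed

lemma cpow_reading_cat:
  assumes "(m, m, R) \<in> arrows"
  shows "cpow reading_cat (to_nat (m, m, R)) n = to_nat (m, m, Id_on (shapes_of_width m) O R ^^ n)"
proof (induction n)
  case (Suc n)
  then show ?case by (simp add: O_assoc relpow_commute)
qed simp

lemma aperiodic_reading_cat: "aperiodic_cat reading_cat 10"
  unfolding aperiodic_cat_def
proof (intro ballI impI)
  fix f assume "f \<in> Mor reading_cat" "cdom reading_cat f = ccod reading_cat f"
  then obtain m R where f: "f = to_nat (m, m, R)" "(m, m, R) \<in> arrows" by auto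
  then have "R ^^ 11 = R ^^ 10" using admissible_relpow_stable by (simp add: arrows_def)
  then show "cpow reading_cat f (10 + 1) = cpow reading_cat f 10"
    using cpow_reading_cat[OF f(2)] f(1) by simp
qed

lemma shapes_of_width_min_3: "shapes_of_width (min n 3) = shapes_of_width n"
proof -
  have "width s = min n 3 \<longleftrightarrow> width s = n" for s using width_le_2[of s] by (auto simp: min_def)
  then show ?thesis unfolding shapes_of_width_def by auto
qed

definition Fobj :: "unit conclist \<Rightarrow> nat" where
  "Fobj U = min (card (cl_car U)) 3"

definition Fmor :: "unit ipomset \<Rightarrow> nat" where
  "Fmor P = to_nat (min (card (psrc P)) 3, min (card (ptgt P)) 3, readings P)"

lemma readings_arrow:
  assumes V: "is_ipomset P"
  shows "(min (card (psrc P)) 3, min (card (ptgt P)) 3, readings P) \<in> arrows"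
proof -
  have "readings P \<subseteq> shapes_of_width (card (psrc P)) \<times> shapes_of_width (card (ptgt P))"
    using readings_card[OF V] unfolding shapes_of_width_def by auto
  then show ?thesis
    using readings_admissible[OF V] shapes_of_width_min_3 unfolding arrows_def by auto
qed

lemma iiPoms_functor_readings: "iiPoms_functor reading_cat Fobj Fmor"
  unfolding iiPoms_functor_def
proof (intro conjI allI impI)
  fix U V :: "unit conclist" assume "is_conclist U \<and> is_conclist V \<and> conclist_iso U V"
  then obtain f where "bij_betw f (cl_car U) (cl_car V)"
    unfolding conclist_iso_def by (elim conjE exE) (rule that)
  then show "Fobj U = Fobj V" unfolding Fobj_def by (simp add: bij_betw_same_card)
next
  fix P Q :: "unit ipomset" assume a: "is_ipomset P \<and> is_ipomset Q \<and> ipomset_iso P Q"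
  then obtain f where f: "bij_betw f (pcar P) (pcar Q)" "f ` psrc P = psrc Q" "f ` ptgt P = ptgt Q"
    unfolding ipomset_iso_def by (elim conjE exE) (rule that, assumption+)
  have "psrc P \<subseteq> pcar P" "ptgt P \<subseteq> pcar P" using is_ipomsetD(3,4) a by auto
  then have "card (psrc Q) = card (psrc P)" "card (ptgt Q) = card (ptgt P)"
    using f by (metis bij_betw_def card_image inj_on_subset)+
  then show "Fmor P = Fmor Q" using readings_iso a unfolding Fmor_def by metis
next
  fix P :: "unit ipomset" assume V: "is_ipomset P"
  show "Fmor P \<in> Mor reading_cat" using readings_arrow[OF V] by (simp add: Fmor_def)
  show "cdom reading_cat (Fmor P) = Fobj (src_cl P)" "ccod reading_cat (Fmor P) = Fobj (tgt_cl P)"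
    by (simp_all add: Fmor_def Fobj_def src_cl_def tgt_cl_def)
next
  fix U :: "unit conclist" assume U: "is_conclist U"
  show "Fobj U \<in> Ob reading_cat" by (simp add: Fobj_def)
  show "Fmor (id_pom U) = cid reading_cat (Fobj U)"
    using readings_id[OF U] shapes_of_width_min_3 by (simp add: Fmor_def Fobj_def id_pom_def)
next
  fix P Q R :: "unit ipomset"
  assume a: "is_ipomset P \<and> is_ipomset Q \<and> is_ipomset R \<and> is_gluing P Q R"
  then obtain i j where G: "gluing P Q R i j" using is_gluingE by blast
  have "card (psrc R) = card (psrc P)" "card (ptgt R) = card (ptgt Q)"
    using gluing.src[OF G] gluing.tgt[OF G] gluing.inj_i[OF G] gluing.inj_j[OF G]
      is_ipomsetD(3)[of P] is_ipomsetD(4)[of Q] a by (metis card_image inj_on_subset)+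
  then show "Fmor R = ccomp reading_cat (Fmor P) (Fmor Q)"
    using gluing.readings_gluing[OF G] by (simp add: Fmor_def)
qed

definition accepting :: "nat set" where
  "accepting = to_nat ` {(0 :: nat, 0 :: nat, R) | R.
     (0, 0, R) \<in> arrows \<and> ((Init, Fin) \<in> R \<or> (Init, Init) \<in> R)}"


lemma P2n_iff_accepting:
  assumes V: "is_ipomset P"
  shows "(\<exists>n. ipomset_iso P (P2n n)) \<longleftrightarrow> Fmor P \<in> accepting"
proof
  assume "\<exists>n. ipomset_iso P (P2n n)"
  then have r: "(Init, Fin) \<in> readings P \<or> (Init, Init) \<in> readings P"
    using P2n_iff_readings[OF V] by blast
  then have "card (psrc P) = 0" "card (ptgt P) = 0" using readings_card[OF V] by auto
  then show "Fmor P \<in> accepting"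
    using r readings_arrow[OF V] unfolding Fmor_def accepting_def by auto
next
  assume "Fmor P \<in> accepting"
  then obtain R where "Fmor P = to_nat (0::nat, 0::nat, R)" "(Init, Fin) \<in> R \<or> (Init, Init) \<in> R"
    unfolding accepting_def by blast
  then have "(Init, Fin) \<in> readings P \<or> (Init, Init) \<in> readings P" unfolding Fmor_def by simp
  then show "\<exists>n. ipomset_iso P (P2n n)" using P2n_iff_readings[OF V] by blast
qed

theorem mainTheorem10:
  shows "\<exists>C N K Fo Fm. finite_category C \<and> aperiodic_cat C N \<and> K \<subseteq> Mor C
     \<and> iiPoms_functor C (Fo :: unit conclist \<Rightarrow> nat) Fm
     \<and> (\<forall>P. is_ipomset P \<longrightarrow> ((\<exists>n. ipomset_iso P (P2n n)) \<longleftrightarrow> Fm P \<in> K))"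
proof -
  have "accepting \<subseteq> Mor reading_cat" unfolding accepting_def by auto
  then show ?thesis
    using finite_category_reading_cat aperiodic_reading_cat iiPoms_functor_readings
      P2n_iff_accepting by blast
qed

end
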